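(* Assume that $u_0\in C(\mathbb{R}^2\times S^1)$ and that there exists $S>0$ such that $u_0$ is constant on $\{(x,y,\theta)\in\mathbb{R}^2\times S^1 : x^2+y^2\ge S\}$. Let $u$ be a Lipschitz continuous vanishing viscosity solution, with initial datum $u_0$, of $$u_t=\sum_{i,j=1}^{2}\Big(\delta_{ij}-\frac{X_iu\,X_ju}{|\nabla_0u|^2}\Big)X_iX_ju \ \text{ in } \mathbb{R}^2\times S^1\times(0,\infty),\qquad u(\cdot,0)=u_0$$ (such as the one whose existence is guaranteed when $u_0$ is moreover Lipschitz). Then $u$ is a viscosity solution of this equation.
   Context: Points of $\mathbb{R}^2\times S^1$ are written $\xi=(x,y,\theta)$. Define the vector fields $X_1=\cos\theta\,\partial_x+\sin\theta\,\partial_y$, $X_2=\partial_\theta$, $X_3=-\sin\theta\,\partial_x+\cos\theta\,\partial_y$; $\nabla_0u=(X_1u,X_2u)$. For $\epsilon>0$ set $X^\epsilon_1=X_1$, $X^\epsilon_2=X_2$, $X^\epsilon_3=\epsilon X_3$, $\nabla_\epsilon u=(X^\epsilon_1u,X^\epsilon_2u,X^\epsilon_3u)$, and for $p\in\mathbb{R}^3$, $\tau,\sigma>0$, $A^{\epsilon,\tau,\sigma}_{ij}(p)=\delta_{ij}-\frac{p_ip_j}{|p|^2+\tau}+\sigma\delta_{ij}$. A vanishing viscosity solution is a (locally uniform) limit of a sequence of solutions $u^{\epsilon_k,\tau_k,\sigma_k}$ of $u_t=\sum_{i,j=1}^3A^{\epsilon_k,\tau_k,\sigma_k}_{ij}(\nabla_{\epsilon_k}u)X^{\epsilon_k}_iX^{\epsilon_k}_ju$,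 $u(\cdot,0)=u_0$, with $\epsilon_k,\tau_k,\sigma_k\to0$. A function $u\in C(\mathbb{R}^2\times S^1\times[0,\infty))$ is a viscosity subsolution if for every $(\xi,t)$ and every smooth $\phi$ such that $u-\phi$ has a local maximum at $(\xi,t)$: if $\nabla_0\phi(\xi,t)\ne0$ then $\partial_t\phi\le\sum_{i,j=1}^2\big(\delta_{ij}-\frac{X_i\phi X_j\phi}{|\nabla_0\phi|^2}\big)X_iX_j\phi$ at $(\xi,t)$; if $\nabla_0\phi(\xi,t)=0$ then $\partial_t\phi\le\sum_{i,j=1}^2(\delta_{ij}-\tilde p_i\tilde p_j)X_iX_j\phi$ at $(\xi,t)$ for some $\tilde p\in\mathbb{R}^2$ with $|\tilde p|\le1$. A viscosity supersolution is defined analogously with local minima and the reverse inequalities, and a viscosity solution is both. *)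

theory Defs
  imports "HOL-Analysis.Analysis"
begin

text \<open>Points of R^2 x S^1 x R are represented as quadruples (x, y, theta, t) of reals;
  S^1 is represented by its universal cover R, functions on R^2 x S^1 being those that are
  2 pi-periodic in theta.  Index convention for partial derivatives:
  0 = d/dx, 1 = d/dy, 2 = d/dtheta, 3 = d/dt.\<close>

type_synonym pt = "real \<times> real \<times> real \<times> real"

definition tc :: "pt \<Rightarrow> real" where "tc p = snd (snd (snd p))"
definition th :: "pt \<Rightarrow> real" where "th p = fst (snd (snd p))"

definition unitv :: "nat \<Rightarrow> pt" where
  "unitv i = (if i = 0 then 1 else 0, if i = 1 then 1 else 0,
              if i = 2 then 1 else 0, if i = 3 then 1 else 0)"

definition partial :: "nat \<Rightarrow> (pt \<Rightarrow> real) \<Rightarrow> pt \<Rightarrow> real" where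
  "partial i f p = deriv (\<lambda>s. f (p + s *\<^sub>R unitv i)) 0"

fun iter_partial :: "nat list \<Rightarrow> (pt \<Rightarrow> real) \<Rightarrow> pt \<Rightarrow> real" where
  "iter_partial [] f = f"
| "iter_partial (i # is) f = partial i (iter_partial is f)"

definition cont_partials :: "pt set \<Rightarrow> (pt \<Rightarrow> real) \<Rightarrow> nat list \<Rightarrow> bool" where
  "cont_partials S f is \<longleftrightarrow>
     (\<forall>j \<le> length is. continuous_on S (iter_partial (drop j is) f)) \<and>
     (\<forall>j < length is. \<forall>p \<in> S.
        (\<lambda>s. iter_partial (drop (Suc j) is) f (p + s *\<^sub>R unitv (is ! j))) differentiable (at 0))"

definition smooth_fun :: "(pt \<Rightarrow> real) \<Rightarrow> bool" where
  "smooth_fun f \<longleftrightarrow> (\<forall>is. set is \<subseteq> {0,1,2,3} \<longrightarrow> cont_partials UNIV f is)"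

definition C21_on :: "pt set \<Rightarrow> (pt \<Rightarrow> real) \<Rightarrow> bool" where
  "C21_on S f \<longleftrightarrow> (\<forall>is. set is \<subseteq> {0,1,2} \<and> length is \<le> 2 \<longrightarrow> cont_partials S f is)
                   \<and> cont_partials S f [3]"

definition VF :: "nat \<Rightarrow> (pt \<Rightarrow> real) \<Rightarrow> pt \<Rightarrow> real" where
  "VF i f = (\<lambda>p. if i = 1 then cos (th p) * partial 0 f p + sin (th p) * partial 1 f p
                 else if i = 2 then partial 2 f p
                 else - sin (th p) * partial 0 f p + cos (th p) * partial 1 f p)"

definition VFe :: "real \<Rightarrow> nat \<Rightarrow> (pt \<Rightarrow> real) \<Rightarrow> pt \<Rightarrow> real" where
  "VFe eps i f = (if i = 3 then (\<lambda>p. eps * VF 3 f p) else VF i f)"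

definition kdelta :: "nat \<Rightarrow> nat \<Rightarrow> real" where
  "kdelta i j = (if i = j then 1 else 0)"

definition Acoef :: "real \<Rightarrow> real \<Rightarrow> (nat \<Rightarrow> real) \<Rightarrow> nat \<Rightarrow> nat \<Rightarrow> real" where
  "Acoef tau sg P i j =
     kdelta i j - P i * P j / ((\<Sum>k\<in>{1,2,3}. (P k)\<^sup>2) + tau) + sg * kdelta i j"

definition reg_solution ::
  "real \<Rightarrow> real \<Rightarrow> real \<Rightarrow> (real \<times> real \<times> real \<Rightarrow> real) \<Rightarrow> (pt \<Rightarrow> real) \<Rightarrow> bool" where
  "reg_solution eps tau sg u0 U \<longleftrightarrow>
     continuous_on {p. tc p \<ge> 0} U \<and>
     (\<forall>x y z t. U (x, y, z + 2 * pi, t) = U (x, y, z, t)) \<and>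
     C21_on {p. tc p > 0} U \<and>
     (\<forall>p. tc p > 0 \<longrightarrow>
        partial 3 U p =
          (\<Sum>i\<in>{1,2,3}. \<Sum>j\<in>{1,2,3}.
             Acoef tau sg (\<lambda>k. VFe eps k U p) i j * VFe eps i (VFe eps j U) p)) \<and>
     (\<forall>x y z. U (x, y, z, 0) = u0 (x, y, z))"

definition vanishing_viscosity_solution ::
  "(real \<times> real \<times> real \<Rightarrow> real) \<Rightarrow> (pt \<Rightarrow> real) \<Rightarrow> bool" where
  "vanishing_viscosity_solution u0 u \<longleftrightarrow>
     (\<exists>eps tau sg :: nat \<Rightarrow> real. \<exists>U :: nat \<Rightarrow> pt \<Rightarrow> real.
        (\<forall>k. eps k > 0 \<and> tau k > 0 \<and> sg k > 0) \<and>
        eps \<longlonglongrightarrow> 0 \<and> tau \<longlonglongrightarrow> 0 \<and> sg \<longlonglongrightarrow> 0 \<and>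
        (\<forall>k. reg_solution (eps k) (tau k) (sg k) u0 (U k)) \<and>
        (\<forall>K. compact K \<and> K \<subseteq> {p. tc p \<ge> 0} \<longrightarrow> uniform_limit K U u sequentially))"

definition grad0_sq :: "(pt \<Rightarrow> real) \<Rightarrow> pt \<Rightarrow> real" where
  "grad0_sq f p = (VF 1 f p)\<^sup>2 + (VF 2 f p)\<^sup>2"

definition mc_op :: "(pt \<Rightarrow> real) \<Rightarrow> pt \<Rightarrow> real" where
  "mc_op f p = (\<Sum>i\<in>{1,2}. \<Sum>j\<in>{1,2}.
                 (kdelta i j - VF i f p * VF j f p / grad0_sq f p) * VF i (VF j f) p)"

definition deg_op :: "(nat \<Rightarrow> real) \<Rightarrow> (pt \<Rightarrow> real) \<Rightarrow> pt \<Rightarrow> real" where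
  "deg_op q f p = (\<Sum>i\<in>{1,2}. \<Sum>j\<in>{1,2}. (kdelta i j - q i * q j) * VF i (VF j f) p)"

definition viscosity_subsolution :: "(pt \<Rightarrow> real) \<Rightarrow> bool" where
  "viscosity_subsolution u \<longleftrightarrow>
     continuous_on {p. tc p \<ge> 0} u \<and>
     (\<forall>p phi. tc p > 0 \<and> smooth_fun phi \<and>
        (\<exists>r>0. \<forall>q. dist q p < r \<and> tc q > 0 \<longrightarrow> u q - phi q \<le> u p - phi p) \<longrightarrow>
        (grad0_sq phi p \<noteq> 0 \<longrightarrow> partial 3 phi p \<le> mc_op phi p) \<and>
        (grad0_sq phi p = 0 \<longrightarrow>
           (\<exists>q. sqrt ((q 1)\<^sup>2 + (q 2)\<^sup>2) \<le> 1 \<and> partial 3 phi p \<le> deg_op q phi p)))"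

definition viscosity_supersolution :: "(pt \<Rightarrow> real) \<Rightarrow> bool" where
  "viscosity_supersolution u \<longleftrightarrow>
     continuous_on {p. tc p \<ge> 0} u \<and>
     (\<forall>p phi. tc p > 0 \<and> smooth_fun phi \<and>
        (\<exists>r>0. \<forall>q. dist q p < r \<and> tc q > 0 \<longrightarrow> u q - phi q \<ge> u p - phi p) \<longrightarrow>
        (grad0_sq phi p \<noteq> 0 \<longrightarrow> partial 3 phi p \<ge> mc_op phi p) \<and>
        (grad0_sq phi p = 0 \<longrightarrow>
           (\<exists>q. sqrt ((q 1)\<^sup>2 + (q 2)\<^sup>2) \<le> 1 \<and> partial 3 phi p \<ge> deg_op q phi p)))"

definition viscosity_solution :: "(pt \<Rightarrow> real) \<Rightarrow> bool" where
  "viscosity_solution u \<longleftrightarrow> viscosity_subsolution u \<and> viscosity_supersolution u"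

end

theory Submission
  imports Defs
begin

text \<open>
  The argument is the stability of viscosity solutions under locally uniform limits, carried out
  on the regularized problems.  Let \<open>s (u - \<phi>)\<close>, with \<open>s = 1\<close> or \<open>s = -1\<close>, have a local
  maximum at \<open>p\<close>.  Since \<open>U\<^sub>k \<longrightarrow> u\<close> uniformly near \<open>p\<close>, maximum points \<open>p\<^sub>k\<close> of
  \<open>s (U\<^sub>k - \<phi>) - |q - p|\<^sup>4\<close> over a small ball converge to \<open>p\<close>.  At \<open>p\<^sub>k\<close> the classical solution
  \<open>U\<^sub>k\<close> is touched by \<open>\<psi> = \<phi> + s |q - p|\<^sup>4\<close>: the gradients agree and the spatial Hessian of
  \<open>s (U\<^sub>k - \<psi>)\<close> is negative semidefinite, so, the matrix \<open>A\<close> being positive semidefinite,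
  \<open>\<psi>\<close> satisfies the regularized inequality at \<open>p\<^sub>k\<close>.  Along a subsequence the normalized
  regularized gradients converge to some \<open>q\<close> with \<open>|q| \<le> 1\<close>; all terms containing \<open>\<epsilon> X\<^sub>3\<close>
  vanish in the limit, which leaves the degenerate inequality for this \<open>q\<close>, and
  \<open>q = \<nabla>\<^sub>0\<phi> / |\<nabla>\<^sub>0\<phi>|\<close> whenever \<open>\<nabla>\<^sub>0\<phi>(p) \<noteq> 0\<close>.  The quartic perturbation leaves the
  derivatives of \<open>\<phi>\<close> up to order two at \<open>p\<close> unchanged.
\<close>

section \<open>Partial derivatives along coordinate lines\<close>

lemma tc_Pair [simp]: "tc (x, y, z, t) = t"
  by (simp add: tc_def)

lemma th_add_unitv: "th (p + s *\<^sub>R unitv k) = th p + (if k = 2 then s else 0)"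
  by (cases p) (auto simp: th_def unitv_def)

lemma tc_add_unitv: "k \<noteq> 3 \<Longrightarrow> tc (p + s *\<^sub>R unitv k) = tc p"
  by (cases p) (auto simp: tc_def unitv_def)

lemma dist_add_unitv: "dist (p + s *\<^sub>R unitv k) p \<le> \<bar>s\<bar>"
proof -
  have "norm (unitv k) \<le> 1"
    by (auto simp: unitv_def norm_Pair)
  then show ?thesis
    by (simp add: dist_norm mult_left_le)
qed

lemma abs_tc_diff_le_dist: "\<bar>tc q - tc p\<bar> \<le> dist q p"
proof -
  have "dist (snd (snd (snd q))) (snd (snd (snd p))) \<le> dist q p"
    by (meson dist_snd_le order_trans)
  then show ?thesis
    by (simp add: tc_def dist_real_def)
qed

lemma open_tc_pos: "open {q. tc q > 0}"
  unfolding tc_def by (intro open_Collect_less continuous_intros)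

lemma has_real_derivative_partial:
  assumes "(\<lambda>s. F (p + s *\<^sub>R unitv k)) differentiable (at 0)"
  shows "((\<lambda>s. F (p + s *\<^sub>R unitv k)) has_real_derivative partial k F p) (at 0)"
  using assms unfolding partial_def by (simp add: DERIV_deriv_iff_real_differentiable)

lemma has_real_derivative_partial_along:
  assumes "(\<lambda>s. F (p + \<theta> *\<^sub>R unitv k + s *\<^sub>R unitv k)) differentiable (at 0)"
  shows "((\<lambda>\<theta>. F (p + \<theta> *\<^sub>R unitv k)) has_real_derivative partial k F (p + \<theta> *\<^sub>R unitv k)) (at \<theta>)"
proof -
  have "(\<lambda>s. F (p + \<theta> *\<^sub>R unitv k + s *\<^sub>R unitv k)) = (\<lambda>s. F (p + (s + \<theta>) *\<^sub>R unitv k))"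
    by (simp add: algebra_simps)
  with has_real_derivative_partial[OF assms] show ?thesis
    using DERIV_shift[of "\<lambda>\<theta>. F (p + \<theta> *\<^sub>R unitv k)" _ 0 \<theta>] by simp
qed

lemma partial_add_scaled:
  assumes "(\<lambda>s. F (p + s *\<^sub>R unitv k)) differentiable (at 0)"
    and "((\<lambda>s. G (p + s *\<^sub>R unitv k)) has_real_derivative D) (at 0)"
  shows "partial k (\<lambda>q. F q + c * G q) p = partial k F p + c * D"
    and "(\<lambda>s. F (p + s *\<^sub>R unitv k) + c * G (p + s *\<^sub>R unitv k)) differentiable (at 0)"
proof -
  have "((\<lambda>s. F (p + s *\<^sub>R unitv k) + c * G (p + s *\<^sub>R unitv k)) has_real_derivative
      partial k F p + c * D) (at 0)"
    using has_real_derivative_partial[OF assms(1)] assms(2) by (intro DERIV_add DERIV_cmult)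
  then show "partial k (\<lambda>q. F q + c * G q) p = partial k F p + c * D"
    and "(\<lambda>s. F (p + s *\<^sub>R unitv k) + c * G (p + s *\<^sub>R unitv k)) differentiable (at 0)"
    by (auto simp: partial_def DERIV_imp_deriv real_differentiable_def)
qed

lemma partial_diff:
  assumes "(\<lambda>s. F (p + s *\<^sub>R unitv k)) differentiable (at 0)"
    and "(\<lambda>s. G (p + s *\<^sub>R unitv k)) differentiable (at 0)"
  shows "partial k (\<lambda>q. F q - G q) p = partial k F p - partial k G p"
    and "(\<lambda>s. F (p + s *\<^sub>R unitv k) - G (p + s *\<^sub>R unitv k)) differentiable (at 0)"
  using partial_add_scaled[OF assms(1) has_real_derivative_partial[OF assms(2)], of "-1"]
  by simp_all

lemma mvt_symmetric:
  fixes g :: "real \<Rightarrow> real"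
  assumes "\<And>\<theta>. \<bar>\<theta>\<bar> \<le> \<bar>h\<bar> \<Longrightarrow> (g has_real_derivative g' \<theta>) (at \<theta>)"
  shows "\<exists>\<theta>. \<bar>\<theta>\<bar> \<le> \<bar>h\<bar> \<and> g h - g 0 = h * g' \<theta>"
proof (cases h "0 :: real" rule: linorder_cases)
  case less
  with MVT2[of h 0 g g'] assms obtain \<theta> where "h < \<theta>" "\<theta> < 0" "g 0 - g h = (0 - h) * g' \<theta>"
    by auto
  then show ?thesis
    by (intro exI[of _ \<theta>]) (auto simp: algebra_simps)
next
  case greater
  with MVT2[of 0 h g g'] assms obtain \<theta> where "0 < \<theta>" "\<theta> < h" "g h - g 0 = (h - 0) * g' \<theta>"
    by auto
  then show ?thesis
    by (intro exI[of _ \<theta>]) auto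
qed simp

lemma partial_mean_value:
  assumes slices: "\<And>q'. dist q' p < \<delta> \<Longrightarrow> (\<lambda>s. F (q' + s *\<^sub>R unitv k)) differentiable (at 0)"
    and "dist q p + \<bar>h\<bar> < \<delta>"
  shows "\<exists>\<theta>. \<bar>\<theta>\<bar> \<le> \<bar>h\<bar> \<and> F (q + h *\<^sub>R unitv k) - F q = h * partial k F (q + \<theta> *\<^sub>R unitv k)"
proof -
  have "dist (q + \<theta> *\<^sub>R unitv k) p < \<delta>" if "\<bar>\<theta>\<bar> \<le> \<bar>h\<bar>" for \<theta>
    using dist_triangle[of "q + \<theta> *\<^sub>R unitv k" p q] dist_add_unitv[of q \<theta> k] assms(2) that by simp
  then show ?thesis
    using mvt_symmetric[of h "\<lambda>\<theta>. F (q + \<theta> *\<^sub>R unitv k)"]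
    by (simp add: has_real_derivative_partial_along slices)
qed

lemma increment_has_real_derivative:
  fixes F :: "pt \<Rightarrow> real" and Q :: "real \<Rightarrow> pt"
  assumes "\<delta> > 0"
    and slices: "\<And>q. dist q p < \<delta> \<Longrightarrow> (\<lambda>s. F (q + s *\<^sub>R unitv k)) differentiable (at 0)"
    and cont: "isCont (partial k F) p"
    and Q: "(Q \<longlongrightarrow> p) (at 0)"
  shows "((\<lambda>s. F (Q s + (s * a) *\<^sub>R unitv k) - F (Q s)) has_real_derivative a * partial k F p) (at 0)"
proof -
  define near where "near s \<longleftrightarrow> dist (Q s) p + \<bar>s * a\<bar> < \<delta> \<and> s \<noteq> 0" for s
  have sa: "((\<lambda>s. s * a) \<longlongrightarrow> 0) (at 0)"
    by (intro tendsto_mult_left_zero tendsto_ident_at)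
  have "\<forall>\<^sub>F s in at 0. dist (Q s) p < \<delta> / 2"
    using tendstoD[OF Q, of "\<delta> / 2"] \<open>\<delta> > 0\<close> by simp
  moreover have "\<forall>\<^sub>F s in at 0. \<bar>s * a\<bar> < \<delta> / 2"
    using tendstoD[OF sa, of "\<delta> / 2"] \<open>\<delta> > 0\<close> by simp
  moreover have "\<forall>\<^sub>F s in at (0 :: real). s \<noteq> 0"
    by (simp add: eventually_at_filter)
  ultimately have "\<forall>\<^sub>F s in at 0. near s"
    unfolding near_def by eventually_elim simp
  have "\<exists>\<theta>. \<bar>\<theta>\<bar> \<le> \<bar>s * a\<bar> \<and>
      F (Q s + (s * a) *\<^sub>R unitv k) - F (Q s) = (s * a) * partial k F (Q s + \<theta> *\<^sub>R unitv k)"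
    if "near s" for s
    using partial_mean_value[OF slices, where q = "Q s" and h = "s * a"] that unfolding near_def by blast
  then obtain \<Theta> where \<Theta>: "\<And>s. near s \<Longrightarrow> \<bar>\<Theta> s\<bar> \<le> \<bar>s * a\<bar> \<and>
      F (Q s + (s * a) *\<^sub>R unitv k) - F (Q s) = (s * a) * partial k F (Q s + \<Theta> s *\<^sub>R unitv k)"
    by metis
  have "(\<Theta> \<longlongrightarrow> 0) (at 0)"
  proof (rule Lim_null_comparison)
    show "\<forall>\<^sub>F s in at 0. norm (\<Theta> s) \<le> \<bar>s * a\<bar>"
      using \<open>\<forall>\<^sub>F s in at 0. near s\<close> by eventually_elim (simp add: \<Theta>)
    show "((\<lambda>s. \<bar>s * a\<bar>) \<longlongrightarrow> 0) (at 0)"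
      using tendsto_rabs[OF sa] by simp
  qed
  then have "((\<lambda>s. Q s + \<Theta> s *\<^sub>R unitv k) \<longlongrightarrow> p + 0 *\<^sub>R unitv k) (at 0)"
    by (intro tendsto_intros Q)
  then have "((\<lambda>s. a * partial k F (Q s + \<Theta> s *\<^sub>R unitv k)) \<longlongrightarrow> a * partial k F p) (at 0)"
    by (intro tendsto_intros isCont_tendsto_compose[OF cont]) simp
  then show ?thesis
    unfolding has_field_derivative_iff
  proof (rule Lim_transform_eventually)
    show "\<forall>\<^sub>F s in at 0. a * partial k F (Q s + \<Theta> s *\<^sub>R unitv k) =
        (F (Q s + (s * a) *\<^sub>R unitv k) - F (Q s) - (F (Q 0 + (0 * a) *\<^sub>R unitv k) - F (Q 0))) / (s - 0)"
      using \<open>\<forall>\<^sub>F s in at 0. near s\<close> by eventually_elim (simp add: \<Theta> near_def)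
  qed
qed

lemma has_real_derivative_spatial_direction:
  fixes F :: "pt \<Rightarrow> real"
  assumes "\<delta> > 0"
    and slices: "\<And>q k. dist q p < \<delta> \<Longrightarrow> k < 3 \<Longrightarrow> (\<lambda>s. F (q + s *\<^sub>R unitv k)) differentiable (at 0)"
    and cont: "\<And>k. k < 3 \<Longrightarrow> isCont (partial k F) p"
  shows "((\<lambda>s. F (p + s *\<^sub>R (a, b, c, 0))) has_real_derivative
           a * partial 0 F p + b * partial 1 F p + c * partial 2 F p) (at 0)"
proof -
  define Q0 where "Q0 s = p + s *\<^sub>R (0, b, c, 0)" for s
  define Q1 where "Q1 s = p + s *\<^sub>R (0, 0, c, 0)" for s
  have path: "Q0 s + (s * a) *\<^sub>R unitv 0 = p + s *\<^sub>R (a, b, c, 0)"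
    "Q1 s + (s * b) *\<^sub>R unitv 1 = Q0 s" "p + (s * c) *\<^sub>R unitv 2 = Q1 s" for s
    by (simp_all add: Q0_def Q1_def unitv_def algebra_simps)
  have "(Q0 \<longlongrightarrow> p + 0 *\<^sub>R (0, b, c, 0)) (at 0)" "(Q1 \<longlongrightarrow> p + 0 *\<^sub>R (0, 0, c, 0)) (at 0)"
    unfolding Q0_def[abs_def] Q1_def[abs_def] by (intro tendsto_intros)+
  then have "(Q0 \<longlongrightarrow> p) (at 0)" "(Q1 \<longlongrightarrow> p) (at 0)"
    by (simp_all only: scaleR_zero_left add_0_right)
  then have "((\<lambda>s. (F (Q0 s + (s * a) *\<^sub>R unitv 0) - F (Q0 s))
         + (F (Q1 s + (s * b) *\<^sub>R unitv 1) - F (Q1 s))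
         + (F (p + (s * c) *\<^sub>R unitv 2) - F p) + F p) has_real_derivative
       a * partial 0 F p + b * partial 1 F p + c * partial 2 F p + 0) (at 0)"
    by (intro DERIV_add DERIV_const increment_has_real_derivative[OF \<open>\<delta> > 0\<close>] slices cont)
      auto
  then show ?thesis
    unfolding path by simp
qed

section \<open>Necessary conditions at a local maximum\<close>

lemma has_real_derivative_spatial_line:
  fixes f :: "pt \<Rightarrow> real"
  assumes slices: "\<And>q k. dist q p < \<delta> \<Longrightarrow> k < 3 \<Longrightarrow> (\<lambda>s. f (q + s *\<^sub>R unitv k)) differentiable (at 0)"
    and cont: "\<And>q k. dist q p < \<delta> \<Longrightarrow> k < 3 \<Longrightarrow> isCont (partial k f) q"
    and near: "dist (p + t *\<^sub>R (a, b, c, 0)) p < \<delta>"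
  shows "((\<lambda>s. f (p + s *\<^sub>R (a, b, c, 0))) has_real_derivative a * partial 0 f (p + t *\<^sub>R (a, b, c, 0))
    + b * partial 1 f (p + t *\<^sub>R (a, b, c, 0)) + c * partial 2 f (p + t *\<^sub>R (a, b, c, 0))) (at t)"
proof -
  define v :: pt where "v = (a, b, c, 0)"
  let ?q = "p + t *\<^sub>R v"
  have inball: "dist q p < \<delta>" if "dist q ?q < \<delta> - dist ?q p" for q
    using that dist_triangle[of q p ?q] by linarith
  have "((\<lambda>\<sigma>. f (?q + \<sigma> *\<^sub>R (a, b, c, 0))) has_real_derivative
      a * partial 0 f ?q + b * partial 1 f ?q + c * partial 2 f ?q) (at 0)"
  proof (rule has_real_derivative_spatial_direction)
    show "\<delta> - dist ?q p > 0"
      using near by (simp add: v_def)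
    show "(\<lambda>\<sigma>. f (q + \<sigma> *\<^sub>R unitv k)) differentiable (at 0)"
      if "dist q ?q < \<delta> - dist ?q p" "k < 3" for q k
      using slices inball that by blast
    show "isCont (partial k f) ?q" if "k < 3" for k
      using cont near that unfolding v_def by blast
  qed
  from this[folded v_def] have "((\<lambda>s. f (p + s *\<^sub>R v)) has_real_derivative
      a * partial 0 f ?q + b * partial 1 f ?q + c * partial 2 f ?q) (at t)"
    using DERIV_shift[of "\<lambda>s. f (p + s *\<^sub>R v)" _ 0 t] by (simp add: algebra_simps)
  then show ?thesis
    unfolding v_def .
qed

lemma second_derivative_nonpos_at_local_max:
  fixes g h :: "real \<Rightarrow> real"
  assumes "\<eta> > 0"
    and max: "\<And>s. \<bar>s\<bar> < \<eta> \<Longrightarrow> g s \<le> g 0"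
    and g': "\<And>s. \<bar>s\<bar> < \<eta> \<Longrightarrow> (g has_real_derivative h s) (at s)"
    and h': "(h has_real_derivative Q) (at 0)"
  shows "Q \<le> 0"
proof (rule ccontr)
  assume "\<not> Q \<le> 0"
  have "h 0 = 0"
    using DERIV_local_max[OF g'[of 0] \<open>\<eta> > 0\<close>] max \<open>\<eta> > 0\<close> by simp
  moreover have "((\<lambda>s. (h s - h 0) / (s - 0)) \<longlongrightarrow> Q) (at 0)"
    using h' by (simp add: has_field_derivative_iff)
  ultimately have "\<forall>\<^sub>F s in at 0. 0 < h s / s"
    using order_tendstoD(1)[of _ Q] \<open>\<not> Q \<le> 0\<close> by fastforce
  then obtain d where "d > 0" and d: "\<And>s. s \<noteq> 0 \<Longrightarrow> \<bar>s\<bar> < d \<Longrightarrow> 0 < h s / s"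
    by (auto simp: eventually_at dist_real_def)
  define s0 where "s0 = min d \<eta> / 2"
  have s0: "0 < s0" "s0 < d" "s0 < \<eta>"
    using \<open>d > 0\<close> \<open>\<eta> > 0\<close> by (auto simp: s0_def)
  then obtain w where w: "0 < w" "w < s0" "g s0 - g 0 = (s0 - 0) * h w"
    using MVT2[of 0 s0 g h] g' by force
  then have "0 < h w"
    using d[of w] s0 by (simp add: zero_less_divide_iff)
  then have "g s0 - g 0 > 0"
    using w s0 by simp
  with max[of s0] s0 show False
    by simp
qed

definition hess_quad :: "(nat \<Rightarrow> nat \<Rightarrow> real) \<Rightarrow> real \<Rightarrow> real \<Rightarrow> real \<Rightarrow> real" where
  "hess_quad H a b c =
     a * (a * H 0 0 + b * H 1 0 + c * H 2 0) + b * (a * H 0 1 + b * H 1 1 + c * H 2 1)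
     + c * (a * H 0 2 + b * H 1 2 + c * H 2 2)"

lemma spatial_hessian_nonpos_at_local_max:
  fixes f :: "pt \<Rightarrow> real"
  assumes "\<delta> > 0"
    and max: "\<And>q. dist q p < \<delta> \<Longrightarrow> f q \<le> f p"
    and slices: "\<And>q i. dist q p < \<delta> \<Longrightarrow> i < 3 \<Longrightarrow> (\<lambda>s. f (q + s *\<^sub>R unitv i)) differentiable (at 0)"
    and slices2: "\<And>q i j. dist q p < \<delta> \<Longrightarrow> i < 3 \<Longrightarrow> j < 3 \<Longrightarrow>
      (\<lambda>s. partial i f (q + s *\<^sub>R unitv j)) differentiable (at 0)"
    and cont1: "\<And>q i. dist q p < \<delta> \<Longrightarrow> i < 3 \<Longrightarrow> isCont (partial i f) q"
    and cont2: "\<And>i j. i < 3 \<Longrightarrow> j < 3 \<Longrightarrow> isCont (partial j (partial i f)) p"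
  shows "hess_quad (\<lambda>k l. partial k (partial l f) p) a b c \<le> 0"
proof -
  define v :: pt where "v = (a, b, c, 0)"
  define \<eta> where "\<eta> = \<delta> / (norm v + 1)"
  have "norm v + 1 > 0"
    by (smt (verit) norm_ge_zero)
  then have "\<eta> > 0"
    using \<open>\<delta> > 0\<close> by (simp add: \<eta>_def)
  have near: "dist (p + s *\<^sub>R v) p < \<delta>" if "\<bar>s\<bar> < \<eta>" for s
  proof -
    have "\<bar>s\<bar> * norm v \<le> \<bar>s\<bar> * (norm v + 1)"
      by (simp add: distrib_left)
    also have "\<dots> < \<delta>"
      using that \<open>norm v + 1 > 0\<close> by (simp add: \<eta>_def pos_less_divide_eq)
    finally show ?thesis
      by (simp add: dist_norm)
  qed
  show ?thesis
  proof (rule second_derivative_nonpos_at_local_max[OF \<open>\<eta> > 0\<close>])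
    show "f (p + s *\<^sub>R v) \<le> f (p + 0 *\<^sub>R v)" if "\<bar>s\<bar> < \<eta>" for s
      using max near[OF that] by simp
    show "((\<lambda>s. f (p + s *\<^sub>R v)) has_real_derivative a * partial 0 f (p + s *\<^sub>R v)
        + b * partial 1 f (p + s *\<^sub>R v) + c * partial 2 f (p + s *\<^sub>R v)) (at s)" if "\<bar>s\<bar> < \<eta>" for s
      using has_real_derivative_spatial_line[OF slices cont1 near[OF that, unfolded v_def]]
      unfolding v_def .
    show "((\<lambda>s. a * partial 0 f (p + s *\<^sub>R v) + b * partial 1 f (p + s *\<^sub>R v)
        + c * partial 2 f (p + s *\<^sub>R v)) has_real_derivative hess_quad (\<lambda>k l. partial k (partial l f) p) a b c)
        (at 0)"
      unfolding v_def hess_quad_def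
      by (intro DERIV_add DERIV_cmult has_real_derivative_spatial_direction[OF \<open>\<delta> > 0\<close>] slices2 cont2)
        auto
  qed
qed

lemma partial_eq_0_at_local_max:
  assumes "\<delta> > 0"
    and max: "\<And>q. dist q p < \<delta> \<Longrightarrow> f q \<le> f p"
    and "(\<lambda>s. f (p + s *\<^sub>R unitv k)) differentiable (at 0)"
  shows "partial k f p = 0"
proof (rule DERIV_local_max[OF has_real_derivative_partial[OF assms(3)] \<open>\<delta> > 0\<close>], intro allI impI)
  fix s :: real
  assume "\<bar>0 - s\<bar> < \<delta>"
  then have "dist (p + s *\<^sub>R unitv k) p < \<delta>"
    using dist_add_unitv[of p s k] by simp
  then show "f (p + s *\<^sub>R unitv k) \<le> f (p + 0 *\<^sub>R unitv k)"
    using max by simp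
qed

section \<open>Pointwise regularity at positive times\<close>

lemma cont_partials_single:
  assumes "cont_partials S F [i]"
  shows "continuous_on S (partial i F)" "continuous_on S F"
    and "q \<in> S \<Longrightarrow> (\<lambda>s. F (q + s *\<^sub>R unitv i)) differentiable (at 0)"
  using assms unfolding cont_partials_def by (auto dest: spec[of _ 0] spec[of _ 1])

lemma cont_partials_pair:
  assumes "cont_partials S F [j, i]"
  shows "continuous_on S (partial j (partial i F))"
    and "q \<in> S \<Longrightarrow> (\<lambda>s. partial i F (q + s *\<^sub>R unitv j)) differentiable (at 0)"
  using assms unfolding cont_partials_def by (auto dest: spec[of _ 0])

definition C21_pointwise :: "(pt \<Rightarrow> real) \<Rightarrow> bool" where
  "C21_pointwise F \<longleftrightarrow> (\<forall>q. tc q > 0 \<longrightarrow>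
     (\<forall>i<4. (\<lambda>s. F (q + s *\<^sub>R unitv i)) differentiable (at 0)) \<and>
     (\<forall>i<3. \<forall>j<3. (\<lambda>s. partial i F (q + s *\<^sub>R unitv j)) differentiable (at 0)) \<and>
     (\<forall>i<3. isCont (partial i F) q) \<and>
     (\<forall>i<3. \<forall>j<3. isCont (partial j (partial i F)) q))"

lemma C21_pointwiseD:
  assumes "C21_pointwise F" "tc q > 0"
  shows "i < 4 \<Longrightarrow> (\<lambda>s. F (q + s *\<^sub>R unitv i)) differentiable (at 0)"
    and "i < 3 \<Longrightarrow> j < 3 \<Longrightarrow> (\<lambda>s. partial i F (q + s *\<^sub>R unitv j)) differentiable (at 0)"
    and "i < 3 \<Longrightarrow> isCont (partial i F) q"
    and "i < 3 \<Longrightarrow> j < 3 \<Longrightarrow> isCont (partial j (partial i F)) q"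
  using assms unfolding C21_pointwise_def by blast+

lemma C21_pointwiseI:
  assumes "\<And>q i. tc q > 0 \<Longrightarrow> i < 4 \<Longrightarrow> (\<lambda>s. F (q + s *\<^sub>R unitv i)) differentiable (at 0)"
    and "\<And>q i j. tc q > 0 \<Longrightarrow> i < 3 \<Longrightarrow> j < 3 \<Longrightarrow>
      (\<lambda>s. partial i F (q + s *\<^sub>R unitv j)) differentiable (at 0)"
    and "\<And>q i. tc q > 0 \<Longrightarrow> i < 3 \<Longrightarrow> isCont (partial i F) q"
    and "\<And>q i j. tc q > 0 \<Longrightarrow> i < 3 \<Longrightarrow> j < 3 \<Longrightarrow> isCont (partial j (partial i F)) q"
  shows "C21_pointwise F"
  using assms unfolding C21_pointwise_def by blast

lemma C21_pointwise_if_C21_on: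
  assumes "C21_on {q. tc q > 0} U"
  shows "C21_pointwise U"
proof -
  let ?T = "{q. tc q > 0}"
  have single: "cont_partials ?T U [i]" if "i < 4" for i
  proof (cases "i = 3")
    case False
    with that have "set [i] \<subseteq> {0, 1, 2}"
      by auto
    with assms show ?thesis
      unfolding C21_on_def by auto
  qed (use assms in \<open>simp add: C21_on_def\<close>)
  have pair: "cont_partials ?T U [j, i]" if "i < 3" "j < 3" for i j
  proof -
    have "set [j, i] \<subseteq> {0, 1, 2}"
      using that by auto
    with assms show ?thesis
      unfolding C21_on_def by auto
  qed
  have isCont: "isCont F q" if "continuous_on ?T F" "tc q > 0" for F :: "pt \<Rightarrow> real" and q
    using that continuous_on_eq_continuous_at[OF open_tc_pos] by blast
  show ?thesis
  proof (rule C21_pointwiseI)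
    fix q i j
    assume "tc q > 0"
    then show "i < 4 \<Longrightarrow> (\<lambda>s. U (q + s *\<^sub>R unitv i)) differentiable (at 0)"
      and "i < 3 \<Longrightarrow> j < 3 \<Longrightarrow> (\<lambda>s. partial i U (q + s *\<^sub>R unitv j)) differentiable (at 0)"
      and "i < 3 \<Longrightarrow> isCont (partial i U) q"
      and "i < 3 \<Longrightarrow> j < 3 \<Longrightarrow> isCont (partial j (partial i U)) q"
      using cont_partials_single(3)[OF single, of i q] cont_partials_pair(2)[OF pair, of i j q]
        isCont[OF cont_partials_single(1)[OF single, of i]]
        isCont[OF cont_partials_pair(1)[OF pair, of i j]] by simp_all
  qed
qed

lemma isCont_cong_tc_pos:
  assumes "tc q > 0" and "\<And>q'. tc q' > 0 \<Longrightarrow> F q' = G q'" and "isCont G q"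
  shows "isCont F q"
proof -
  have "\<forall>\<^sub>F q' in nhds q. tc q' > 0"
    using eventually_nhds_in_open[OF open_tc_pos] assms(1) by simp
  then have "\<forall>\<^sub>F q' in nhds q. F q' = G q'"
    by (rule eventually_mono) (rule assms(2))
  then show ?thesis
    using isCont_cong assms(3) by blast
qed

context
  fixes A B :: "pt \<Rightarrow> real"
  assumes A: "C21_pointwise A" and B: "C21_pointwise B"
begin

lemma partial_diff_tc_pos:
  "tc q > 0 \<Longrightarrow> i < 4 \<Longrightarrow> partial i (\<lambda>q. A q - B q) q = partial i A q - partial i B q"
  by (intro partial_diff C21_pointwiseD[OF A] C21_pointwiseD[OF B])

lemma partial2_diff_tc_pos:
  assumes "tc q > 0" "i < 3" "j < 3"
  shows "partial j (partial i (\<lambda>q. A q - B q)) q = partial j (partial i A) q - partial j (partial i B) q"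
proof -
  have "partial i (\<lambda>q. A q - B q) (q + s *\<^sub>R unitv j) =
      partial i A (q + s *\<^sub>R unitv j) - partial i B (q + s *\<^sub>R unitv j)" for s
    using assms by (simp add: partial_diff_tc_pos tc_add_unitv)
  then have "partial j (partial i (\<lambda>q. A q - B q)) q = partial j (\<lambda>q. partial i A q - partial i B q) q"
    by (simp add: partial_def)
  also have "\<dots> = partial j (partial i A) q - partial j (partial i B) q"
    using assms by (intro partial_diff C21_pointwiseD[OF A] C21_pointwiseD[OF B])
  finally show ?thesis .
qed

lemma C21_pointwise_diff: "C21_pointwise (\<lambda>q. A q - B q)"
proof (rule C21_pointwiseI)
  fix q :: pt and i j :: nat
  assume q: "tc q > 0"
  note A' = C21_pointwiseD[OF A q] and B' = C21_pointwiseD[OF B q]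
  show "(\<lambda>s. A (q + s *\<^sub>R unitv i) - B (q + s *\<^sub>R unitv i)) differentiable (at 0)" if "i < 4"
    by (rule partial_diff(2)[OF A'(1)[OF that] B'(1)[OF that]])
  show "(\<lambda>s. partial i (\<lambda>q. A q - B q) (q + s *\<^sub>R unitv j)) differentiable (at 0)"
    if "i < 3" "j < 3"
  proof -
    have "partial i (\<lambda>q. A q - B q) (q + s *\<^sub>R unitv j) =
        partial i A (q + s *\<^sub>R unitv j) - partial i B (q + s *\<^sub>R unitv j)" for s
      using q that by (simp add: partial_diff_tc_pos tc_add_unitv)
    then show ?thesis
      using partial_diff(2)[OF A'(2)[OF that] B'(2)[OF that]] by simp
  qed
  show "isCont (partial i (\<lambda>q. A q - B q)) q" if "i < 3"
  proof (rule isCont_cong_tc_pos[OF q])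
    show "partial i (\<lambda>q. A q - B q) q' = partial i A q' - partial i B q'" if "tc q' > 0" for q'
      using \<open>i < 3\<close> that by (simp add: partial_diff_tc_pos)
    show "isCont (\<lambda>q. partial i A q - partial i B q) q"
      using A'(3)[OF that] B'(3)[OF that] by (rule isCont_diff)
  qed
  show "isCont (partial j (partial i (\<lambda>q. A q - B q))) q" if "i < 3" "j < 3"
  proof (rule isCont_cong_tc_pos[OF q])
    show "partial j (partial i (\<lambda>q. A q - B q)) q' = partial j (partial i A) q' - partial j (partial i B) q'"
      if "tc q' > 0" for q'
      using \<open>i < 3\<close> \<open>j < 3\<close> that by (simp add: partial2_diff_tc_pos)
    show "isCont (\<lambda>q. partial j (partial i A) q - partial j (partial i B) q) q"
      using A'(4)[OF that] B'(4)[OF that] by (rule isCont_diff)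
  qed
qed

lemma local_max_diff:
  assumes "\<delta> > 0" "\<delta> \<le> tc p"
    and max: "\<And>q. dist q p < \<delta> \<Longrightarrow> A q - B q \<le> A p - B p"
  shows "k < 4 \<Longrightarrow> partial k A p = partial k B p"
    and "hess_quad (\<lambda>k l. partial k (partial l A) p - partial k (partial l B) p) a b c \<le> 0"
proof -
  have near: "tc q > 0" if "dist q p < \<delta>" for q
    using abs_tc_diff_le_dist[of q p] that assms(2) by linarith
  have p: "tc p > 0"
    using assms(1,2) by linarith
  note D = C21_pointwiseD[OF C21_pointwise_diff]
  show "partial k A p = partial k B p" if "k < 4"
    using partial_eq_0_at_local_max[of \<delta> p "\<lambda>q. A q - B q" k] \<open>\<delta> > 0\<close> max D(1)[OF p that]
    by (simp add: partial_diff_tc_pos[OF p that])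
  have "hess_quad (\<lambda>k l. partial k (partial l (\<lambda>q. A q - B q)) p) a b c \<le> 0"
  proof (rule spatial_hessian_nonpos_at_local_max[of \<delta> p "\<lambda>q. A q - B q"])
    fix q i j
    assume "dist q p < \<delta>"
    note Dq = D[OF near[OF this]]
    show "i < 3 \<Longrightarrow> (\<lambda>s. A (q + s *\<^sub>R unitv i) - B (q + s *\<^sub>R unitv i)) differentiable (at 0)"
      using Dq(1)[of i] by simp
    show "i < 3 \<Longrightarrow> j < 3 \<Longrightarrow>
        (\<lambda>s. partial i (\<lambda>q. A q - B q) (q + s *\<^sub>R unitv j)) differentiable (at 0)"
      by (rule Dq(2))
    show "i < 3 \<Longrightarrow> isCont (partial i (\<lambda>q. A q - B q)) q"
      by (rule Dq(3))
  qed (use \<open>\<delta> > 0\<close> max D(4)[OF p] in auto)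
  then show "hess_quad (\<lambda>k l. partial k (partial l A) p - partial k (partial l B) p) a b c \<le> 0"
    using p by (simp add: hess_quad_def partial2_diff_tc_pos)
qed

end

lemma local_max_signed_diff:
  assumes U: "C21_pointwise U" and \<psi>: "C21_pointwise \<psi>" and "\<delta> > 0" "\<delta> \<le> tc p"
    and s: "s = 1 \<or> s = -1"
    and max: "\<And>q. dist q p < \<delta> \<Longrightarrow> s * (U q - \<psi> q) \<le> s * (U p - \<psi> p)"
  shows "k < 4 \<Longrightarrow> partial k U p = partial k \<psi> p"
    and "hess_quad (\<lambda>k l. s * (partial k (partial l U) p - partial k (partial l \<psi>) p)) a b c \<le> 0"
proof -
  note max_UV = local_max_diff[OF U \<psi> \<open>\<delta> > 0\<close> \<open>\<delta> \<le> tc p\<close>]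
    and max_VU = local_max_diff[OF \<psi> U \<open>\<delta> > 0\<close> \<open>\<delta> \<le> tc p\<close>]
  have max': "\<psi> q - U q \<le> \<psi> p - U p" if "s = -1" "dist q p < \<delta>" for q
    using max[OF that(2)] that(1) by simp
  show "partial k U p = partial k \<psi> p" if "k < 4"
    using s max_UV(1)[OF _ that] max_VU(1)[OF max' that] max by auto
  show "hess_quad (\<lambda>k l. s * (partial k (partial l U) p - partial k (partial l \<psi>) p)) a b c \<le> 0"
    using s max_UV(2) max_VU(2)[OF max'] max by (auto simp: hess_quad_def algebra_simps)
qed

section \<open>Second derivatives along the moving frame\<close>

lemma partial_angle_combination:
  fixes A B :: "real \<Rightarrow> real"
  assumes dA: "(A has_real_derivative A') (at (th p))" and dB: "(B has_real_derivative B') (at (th p))"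
    and dF: "(\<lambda>s. F (p + s *\<^sub>R unitv k)) differentiable (at 0)"
    and dG: "(\<lambda>s. G (p + s *\<^sub>R unitv k)) differentiable (at 0)"
  defines "c \<equiv> if k = 2 then 1 else 0"
  shows "partial k (\<lambda>q. A (th q) * F q + B (th q) * G q) p
    = c * (A' * F p + B' * G p) + A (th p) * partial k F p + B (th p) * partial k G p"
proof -
  have th: "th (p + s *\<^sub>R unitv k) = th p + s * c" for s
    by (simp add: th_add_unitv c_def)
  have "((\<lambda>s. th p + s * c) has_real_derivative c) (at 0)"
    by (auto intro!: derivative_eq_intros)
  then have "((\<lambda>s. A (th p + s * c)) has_real_derivative A' * c) (at 0)"
    and "((\<lambda>s. B (th p + s * c)) has_real_derivative B' * c) (at 0)"
    using DERIV_chain2[of A A' "\<lambda>s. th p + s * c"] DERIV_chain2[of B B' "\<lambda>s. th p + s * c"] dA dB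
    by simp_all
  then have "((\<lambda>s. A (th p + s * c) * F (p + s *\<^sub>R unitv k) + B (th p + s * c) * G (p + s *\<^sub>R unitv k))
      has_real_derivative c * (A' * F p + B' * G p) + A (th p) * partial k F p + B (th p) * partial k G p)
      (at 0)"
    using has_real_derivative_partial[OF dF] has_real_derivative_partial[OF dG]
    by (auto intro!: derivative_eq_intros simp: algebra_simps)
  then show ?thesis
    unfolding partial_def th by (rule DERIV_imp_deriv)
qed

definition partials_differentiable_at :: "(pt \<Rightarrow> real) \<Rightarrow> pt \<Rightarrow> bool" where
  "partials_differentiable_at f p \<longleftrightarrow> (\<forall>i<3. \<forall>j<3. (\<lambda>s. partial i f (p + s *\<^sub>R unitv j)) differentiable (at 0))"

lemma VF_angle_combination:
  assumes reg: "partials_differentiable_at f p" and dA: "(A has_real_derivative A') (at (th p))"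
    and dB: "(B has_real_derivative B') (at (th p))"
  defines "g \<equiv> \<lambda>q. A (th q) * partial 0 f q + B (th q) * partial 1 f q"
  shows "VF 1 g p = cos (th p) * (A (th p) * partial 0 (partial 0 f) p + B (th p) * partial 0 (partial 1 f) p)
                  + sin (th p) * (A (th p) * partial 1 (partial 0 f) p + B (th p) * partial 1 (partial 1 f) p)"
    and "VF 2 g p = A' * partial 0 f p + A (th p) * partial 2 (partial 0 f) p
                  + B' * partial 1 f p + B (th p) * partial 2 (partial 1 f) p"
    and "VF 3 g p = - sin (th p) * (A (th p) * partial 0 (partial 0 f) p + B (th p) * partial 0 (partial 1 f) p)
                  + cos (th p) * (A (th p) * partial 1 (partial 0 f) p + B (th p) * partial 1 (partial 1 f) p)"
proof -
  have d: "(\<lambda>s. partial i f (p + s *\<^sub>R unitv k)) differentiable (at 0)" if "i < 3" "k < 3" for i k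
    using reg that unfolding partials_differentiable_at_def by blast
  have pc: "partial k g p = (if k = 2 then 1 else 0) * (A' * partial 0 f p + B' * partial 1 f p)
      + A (th p) * partial k (partial 0 f) p + B (th p) * partial k (partial 1 f) p" if "k < 3" for k
    unfolding g_def by (rule partial_angle_combination[OF dA dB d d]) (use that in auto)
  show "VF 1 g p = cos (th p) * (A (th p) * partial 0 (partial 0 f) p + B (th p) * partial 0 (partial 1 f) p)
                  + sin (th p) * (A (th p) * partial 1 (partial 0 f) p + B (th p) * partial 1 (partial 1 f) p)"
    using pc[of 0] pc[of 1] by (simp add: VF_def)
  show "VF 2 g p = A' * partial 0 f p + A (th p) * partial 2 (partial 0 f) p
                  + B' * partial 1 f p + B (th p) * partial 2 (partial 1 f) p"
    using pc[of 2] by (simp add: VF_def algebra_simps)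
  show "VF 3 g p = - sin (th p) * (A (th p) * partial 0 (partial 0 f) p + B (th p) * partial 0 (partial 1 f) p)
                  + cos (th p) * (A (th p) * partial 1 (partial 0 f) p + B (th p) * partial 1 (partial 1 f) p)"
    using pc[of 0] pc[of 1] by (simp add: VF_def)
qed

text \<open>\<open>X\<^sup>e\<^sub>i = \<Sum>\<^sub>k frame_coef e \<theta> i k \<partial>\<^sub>k\<close>.  Hence \<open>X\<^sup>e\<^sub>i X\<^sup>e\<^sub>j f\<close> is the spatial Hessian of \<open>f\<close> contracted
  with these coefficients plus first-order terms, which arise only when \<open>X\<^sub>2 = \<partial>\<^sub>\<theta>\<close> hits the
  \<open>\<theta>\<close>-dependent coefficients of \<open>X\<^sub>1\<close> or \<open>X\<^sup>e\<^sub>3\<close>.\<close>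

definition frame_coef :: "real \<Rightarrow> real \<Rightarrow> nat \<Rightarrow> nat \<Rightarrow> real" where
  "frame_coef e z i k = (if i = 1 then (if k = 0 then cos z else if k = 1 then sin z else 0)
                 else if i = 2 then (if k = 2 then 1 else 0)
                 else e * (if k = 0 then - sin z else if k = 1 then cos z else 0))"

definition frame_hessian :: "(nat \<Rightarrow> nat \<Rightarrow> real) \<Rightarrow> real \<Rightarrow> real \<Rightarrow> nat \<Rightarrow> nat \<Rightarrow> real" where
  "frame_hessian H e z i j = (\<Sum>k\<in>{0,1,2}. \<Sum>l\<in>{0,1,2}. frame_coef e z i k * frame_coef e z j l * H k l)"

definition frame_drift :: "real \<Rightarrow> real \<Rightarrow> real \<Rightarrow> real \<Rightarrow> nat \<Rightarrow> nat \<Rightarrow> real" where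
  "frame_drift f0 f1 e z i j = (if i = 2 \<and> j = 1 then - sin z * f0 + cos z * f1
     else if i = 2 \<and> j = 3 then e * (- cos z * f0 - sin z * f1) else 0)"

lemma VFe_VFe_expand:
  assumes reg: "partials_differentiable_at f p" and ij: "i \<in> {1,2,3}" "j \<in> {1,2,3}"
  shows "VFe e i (VFe e j f) p = frame_hessian (\<lambda>k l. partial k (partial l f) p) e (th p) i j
                               + frame_drift (partial 0 f p) (partial 1 f p) e (th p) i j"
proof -
  have j1: "VFe e 1 f = (\<lambda>q. cos (th q) * partial 0 f q + sin (th q) * partial 1 f q)"
    by (simp add: VFe_def VF_def fun_eq_iff)
  have j3: "VFe e 3 f =
      (\<lambda>q. (\<lambda>\<theta>. - (e * sin \<theta>)) (th q) * partial 0 f q + (\<lambda>\<theta>. e * cos \<theta>) (th q) * partial 1 f q)"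
    by (simp add: VFe_def VF_def fun_eq_iff algebra_simps)
  have j2: "VFe e 2 f = partial 2 f" by (simp add: VFe_def VF_def fun_eq_iff)
  have dc: "(cos has_real_derivative - sin (th p)) (at (th p))" by (rule DERIV_cos)
  have ds: "(sin has_real_derivative cos (th p)) (at (th p))" by (rule DERIV_sin)
  have d3a: "((\<lambda>\<theta>. - (e * sin \<theta>)) has_real_derivative - (e * cos (th p))) (at (th p))"
    by (auto intro!: derivative_eq_intros)
  have d3b: "((\<lambda>\<theta>. e * cos \<theta>) has_real_derivative e * - sin (th p)) (at (th p))"
    by (auto intro!: derivative_eq_intros)
  note C1 = VF_angle_combination[OF reg dc ds]
  note C3 = VF_angle_combination[OF reg d3a d3b]
  have V2:
    "VF 1 (partial 2 f) p = cos (th p) * partial 0 (partial 2 f) p + sin (th p) * partial 1 (partial 2 f) p"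
    "VF 2 (partial 2 f) p = partial 2 (partial 2 f) p"
    "VF 3 (partial 2 f) p = - sin (th p) * partial 0 (partial 2 f) p + cos (th p) * partial 1 (partial 2 f) p"
    by (simp_all add: VF_def)
  have VFe_i: "VFe e 1 g p = VF 1 g p" "VFe e 2 g p = VF 2 g p" "VFe e 3 g p = e * VF 3 g p" for g
    by (simp_all add: VFe_def)
  from ij show ?thesis
    unfolding insert_iff empty_iff
    by (elim disjE; simp only: VFe_i j1 j2 j3 C1 C3 V2;
        simp add: frame_hessian_def frame_coef_def frame_drift_def algebra_simps)
qed

lemma frame_hessian_form_nonpos:
  assumes "\<And>a b c. hess_quad H a b c \<le> 0"
  shows "(\<Sum>i\<in>{1,2,3}. \<Sum>j\<in>{1,2,3}. x i * x j * frame_hessian H e z i j) \<le> 0"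
proof -
  have "(\<Sum>i\<in>{1,2,3}. \<Sum>j\<in>{1,2,3}. x i * x j * frame_hessian H e z i j) =
      hess_quad H (x 1 * cos z - x 3 * e * sin z) (x 1 * sin z + x 3 * e * cos z) (x 2)"
    by (simp add: frame_hessian_def frame_coef_def hess_quad_def algebra_simps)
  with assms show ?thesis
    by simp
qed

lemma isCont_th: "isCont th q"
  unfolding th_def[abs_def] by (intro continuous_intros)

lemma isCont_frame_expansion:
  assumes H: "\<And>k l. k < 3 \<Longrightarrow> l < 3 \<Longrightarrow> isCont (H k l) p0" and G: "isCont G0 p0" "isCont G1 p0"
    and ij: "i \<in> {1,2,3}" "j \<in> {1,2,3}"
  shows "isCont (\<lambda>q. frame_hessian (\<lambda>k l. H k l q) e (th q) i j + frame_drift (G0 q) (G1 q) e (th q) i j) p0"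
proof -
  have HH: "isCont (H 0 0) p0" "isCont (H 0 1) p0" "isCont (H 0 2) p0"
     "isCont (H 1 0) p0" "isCont (H 1 1) p0" "isCont (H 1 2) p0"
     "isCont (H 2 0) p0" "isCont (H 2 1) p0" "isCont (H 2 2) p0"
     "isCont (H 0 (Suc 0)) p0" "isCont (H (Suc 0) 0) p0" "isCont (H (Suc 0) (Suc 0)) p0"
     "isCont (H (Suc 0) 2) p0" "isCont (H 2 (Suc 0)) p0" \<comment> \<open>index \<open>1\<close> also occurs as \<open>Suc 0\<close> after simplification\<close>
    by (simp_all add: H)
  from ij show ?thesis
    unfolding insert_iff empty_iff
    by (elim disjE; simp add: frame_hessian_def frame_coef_def frame_drift_def;
        intro continuous_intros HH G isCont_th)
qed

definition eps_weight :: "real \<Rightarrow> nat \<Rightarrow> real" where "eps_weight e i = (if i = 3 then e else 1)"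

lemma VFe_VFe_eps_weight:
  assumes "partials_differentiable_at f q" "i \<in> {1,2,3}" "j \<in> {1,2,3}"
  shows "VFe e i (VFe e j f) q = eps_weight e i * eps_weight e j * VFe 1 i (VFe 1 j f) q"
  unfolding VFe_VFe_expand[OF assms] using assms(2,3)
  by (auto simp: frame_hessian_def frame_coef_def frame_drift_def eps_weight_def algebra_simps)

section \<open>The regularized operator\<close>

text \<open>With \<open>N = |P|\<^sup>2 + \<tau>\<close>, one has \<open>N \<Sum> A\<^sub>i\<^sub>j B\<^sub>i\<^sub>j = (\<tau> + \<sigma> N) tr B + Y\<^sub>1 + Y\<^sub>2 + Y\<^sub>3\<close>, where each
  \<open>Y\<^sub>m\<close> is the quadratic form of \<open>B\<close> at a vector orthogonal to \<open>P\<close> in a coordinate plane.\<close>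

lemma Acoef_contraction_nonpos:
  fixes B :: "nat \<Rightarrow> nat \<Rightarrow> real" and P :: "nat \<Rightarrow> real"
  assumes tau: "\<tau> > 0" and sg: "\<sigma> \<ge> 0"
  and neg: "\<And>x::nat\<Rightarrow>real. (\<Sum>i\<in>{1,2,3}. \<Sum>j\<in>{1,2,3}. x i * x j * B i j) \<le> 0"
  shows "(\<Sum>i\<in>{1,2,3}. \<Sum>j\<in>{1,2,3}. Acoef \<tau> \<sigma> P i j * B i j) \<le> 0"
proof -
  define N where "N = (P 1)\<^sup>2 + (P 2)\<^sup>2 + (P 3)\<^sup>2 + \<tau>"
  have Npos: "N > 0" unfolding N_def using tau by (smt (verit) zero_le_power2)
  have t1: "B 1 1 \<le> 0" using neg[of "\<lambda>i. if i = 1 then 1 else 0"] by simp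
  have t2: "B 2 2 \<le> 0" using neg[of "\<lambda>i. if i = 2 then 1 else 0"] by simp
  have t3: "B 3 3 \<le> 0" using neg[of "\<lambda>i. if i = 3 then 1 else 0"] by simp
  define Y1 where "Y1 = (P 3)\<^sup>2 * B 2 2 - P 3 * P 2 * B 2 3 - P 2 * P 3 * B 3 2 + (P 2)\<^sup>2 * B 3 3"
  define Y2 where "Y2 = (P 3)\<^sup>2 * B 1 1 - P 3 * P 1 * B 1 3 - P 1 * P 3 * B 3 1 + (P 1)\<^sup>2 * B 3 3"
  define Y3 where "Y3 = (P 2)\<^sup>2 * B 1 1 - P 2 * P 1 * B 1 2 - P 1 * P 2 * B 2 1 + (P 1)\<^sup>2 * B 2 2"
  have y1: "Y1 \<le> 0" using neg[of "\<lambda>i. if i = 2 then P 3 else if i = 3 then - P 2 else 0"]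
    by (simp add: Y1_def power2_eq_square algebra_simps)
  have y2: "Y2 \<le> 0" using neg[of "\<lambda>i. if i = 1 then P 3 else if i = 3 then - P 1 else 0"]
    by (simp add: Y2_def power2_eq_square algebra_simps)
  have y3: "Y3 \<le> 0" using neg[of "\<lambda>i. if i = 1 then P 2 else if i = 2 then - P 1 else 0"]
    by (simp add: Y3_def power2_eq_square algebra_simps)
  have A: "Acoef \<tau> \<sigma> P i j = kdelta i j * (1 + \<sigma>) - P i * P j / N" for i j
    by (simp add: Acoef_def N_def algebra_simps)
  define Q where "Q = (\<Sum>i\<in>{1,2,3}. \<Sum>j\<in>{1,2,3}. P i * P j * B i j)"
  have S: "(\<Sum>i\<in>{1,2,3}. \<Sum>j\<in>{1,2,3}. Acoef \<tau> \<sigma> P i j * B i j)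
      = (1 + \<sigma>) * (B 1 1 + B 2 2 + B 3 3) - Q / N"
    unfolding A Q_def by (simp add: kdelta_def algebra_simps add_divide_distrib diff_divide_distrib)
  have E': "N * ((1 + \<sigma>) * (B 1 1 + B 2 2 + B 3 3)) - Q
      = (\<tau> + \<sigma> * N) * (B 1 1 + B 2 2 + B 3 3) + (Y1 + Y2 + Y3)"
    unfolding Q_def Y1_def Y2_def Y3_def N_def by (simp add: algebra_simps power2_eq_square)
  have E: "(\<Sum>i\<in>{1,2,3}. \<Sum>j\<in>{1,2,3}. Acoef \<tau> \<sigma> P i j * B i j) * N
     = (\<tau> + \<sigma> * N) * (B 1 1 + B 2 2 + B 3 3) + (Y1 + Y2 + Y3)"
  proof -
    have "((1 + \<sigma>) * (B 1 1 + B 2 2 + B 3 3) - Q / N) * N = N * ((1 + \<sigma>) * (B 1 1 + B 2 2 + B 3 3)) - Q"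
      using Npos by (simp add: left_diff_distrib)
    then show ?thesis unfolding S E' .
  qed
  have "(\<tau> + \<sigma> * N) * (B 1 1 + B 2 2 + B 3 3) \<le> 0"
    using t1 t2 t3 tau sg Npos by (intro mult_nonneg_nonpos) auto
  then have "(\<Sum>i\<in>{1,2,3}. \<Sum>j\<in>{1,2,3}. Acoef \<tau> \<sigma> P i j * B i j) * N \<le> 0"
    using E y1 y2 y3 by linarith
  then show ?thesis using Npos by (simp add: mult_le_0_iff)
qed

lemma abs_Acoef_le:
  assumes tau: "tau > 0" and sg: "sg \<ge> 0" and ij: "i \<in> {1,2,3}" "j \<in> {1,2,3}"
  shows "\<bar>Acoef tau sg P i j\<bar> \<le> 2 + sg"
proof -
  define N where "N = (\<Sum>k\<in>{1,2,3}. (P k)\<^sup>2) + tau"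
  have N: "N = (P 1)\<^sup>2 + (P 2)\<^sup>2 + (P 3)\<^sup>2 + tau" by (simp add: N_def)
  have Npos: "N > 0" using tau unfolding N by (smt (verit) zero_le_power2)
  have Pi: "(P i)\<^sup>2 \<le> N - tau" and Pj: "(P j)\<^sup>2 \<le> N - tau" using ij unfolding N by auto
  have "2 * \<bar>P i * P j\<bar> \<le> (P i)\<^sup>2 + (P j)\<^sup>2"
    using sum_squares_bound[of "\<bar>P i\<bar>" "\<bar>P j\<bar>"] by (simp add: abs_mult power2_abs)
  also have "\<dots> \<le> 2 * N" using Pi Pj tau by linarith
  finally have "\<bar>P i * P j\<bar> \<le> N" by simp
  then have X: "\<bar>P i * P j / N\<bar> \<le> 1" using Npos by (simp add: abs_divide divide_le_eq_1)
  have A: "Acoef tau sg P i j = kdelta i j - P i * P j / N + sg * kdelta i j"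
    by (simp add: Acoef_def N_def)
  show ?thesis
  proof (cases "i = j")
    case True
    then have "Acoef tau sg P i j = 1 - P i * P j / N + sg" unfolding A kdelta_def by simp
    moreover have "- 1 \<le> P i * P j / N \<and> P i * P j / N \<le> 1" using X unfolding abs_le_iff by auto
    ultimately show ?thesis using sg by (simp only: abs_le_iff) linarith
  next
    case False
    then show ?thesis unfolding A kdelta_def using X sg by simp
  qed
qed

lemma Acoef_eq_normalized:
  assumes tau: "tau > 0"
  shows "Acoef tau sg P i j = kdelta i j * (1 + sg) -
     (P i / sqrt ((P 1)\<^sup>2 + (P 2)\<^sup>2 + (P 3)\<^sup>2 + tau)) * (P j / sqrt ((P 1)\<^sup>2 + (P 2)\<^sup>2 + (P 3)\<^sup>2 + tau))"
proof -
  define N where "N = (P 1)\<^sup>2 + (P 2)\<^sup>2 + (P 3)\<^sup>2 + tau"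
  have Npos: "N > 0" using tau unfolding N_def by (smt (verit) zero_le_power2)
  have ss: "sqrt N * sqrt N = N" using Npos by simp
  have "(P i / sqrt N) * (P j / sqrt N) = P i * P j / (sqrt N * sqrt N)" by simp
  then have "(P i / sqrt N) * (P j / sqrt N) = P i * P j / N" unfolding ss .
  then show ?thesis unfolding N_def[symmetric] by (simp add: Acoef_def N_def kdelta_def algebra_simps)
qed

definition regularized_operator :: "real \<Rightarrow> real \<Rightarrow> real \<Rightarrow> (pt \<Rightarrow> real) \<Rightarrow> pt \<Rightarrow> real" where
  "regularized_operator e \<tau> \<sigma> f p =
     (\<Sum>i\<in>{1,2,3}. \<Sum>j\<in>{1,2,3}. Acoef \<tau> \<sigma> (\<lambda>k. VFe e k f p) i j * VFe e i (VFe e j f) p)"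

lemma regularized_operator_eps_weight:
  assumes "partials_differentiable_at f q"
  shows "regularized_operator e \<tau> \<sigma> f q = (\<Sum>i\<in>{1,2,3}. \<Sum>j\<in>{1,2,3}.
    Acoef \<tau> \<sigma> (\<lambda>m. eps_weight e m * VF m f q) i j * (eps_weight e i * eps_weight e j * VFe 1 i (VFe 1 j f) q))"
proof -
  have "(\<lambda>m. VFe e m f q) = (\<lambda>m. eps_weight e m * VF m f q)"
    by (simp add: fun_eq_iff VFe_def eps_weight_def)
  then show ?thesis
    unfolding regularized_operator_def
    by (intro sum.cong refl) (simp add: VFe_VFe_eps_weight[OF assms, where e = e])
qed

lemma regularized_touching:
  assumes "\<tau> > 0" "\<sigma> \<ge> 0" "\<delta> > 0" "\<delta> \<le> tc p" and s: "s = 1 \<or> s = -1"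
    and max: "\<And>q. dist q p < \<delta> \<Longrightarrow> s * (U q - \<psi> q) \<le> s * (U p - \<psi> p)"
    and U: "C21_pointwise U" and \<psi>: "C21_pointwise \<psi>"
    and pde: "partial 3 U p = regularized_operator e \<tau> \<sigma> U p"
  shows "s * partial 3 \<psi> p \<le> s * regularized_operator e \<tau> \<sigma> \<psi> p"
proof -
  define H where "H k l = partial k (partial l U) p - partial k (partial l \<psi>) p" for k l
  note grad = local_max_signed_diff(1)[OF U \<psi> \<open>\<delta> > 0\<close> \<open>\<delta> \<le> tc p\<close> s max]
  have "tc p > 0"
    using \<open>\<delta> > 0\<close> \<open>\<delta> \<le> tc p\<close> by linarith
  then have reg: "partials_differentiable_at U p" "partials_differentiable_at \<psi> p"
    using C21_pointwiseD(2)[OF U] C21_pointwiseD(2)[OF \<psi>] by (auto simp: partials_differentiable_at_def)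
  have VFe_eq: "VFe e k U p = VFe e k \<psi> p" for k
    using grad[of 0] grad[of 1] grad[of 2] by (simp add: VFe_def VF_def)
  have VFe_VFe_eq: "VFe e i (VFe e j U) p = VFe e i (VFe e j \<psi>) p + frame_hessian H e (th p) i j"
    if "i \<in> {1,2,3}" "j \<in> {1,2,3}" for i j
    using VFe_VFe_expand[OF reg(1) that, of e] VFe_VFe_expand[OF reg(2) that, of e] grad[of 0] grad[of 1]
    by (simp add: frame_hessian_def H_def algebra_simps sum_subtractf)
  let ?A = "\<lambda>i j. Acoef \<tau> \<sigma> (\<lambda>k. VFe e k \<psi> p) i j"
  have "(\<Sum>i\<in>{1,2,3}. \<Sum>j\<in>{1,2,3}. ?A i j * frame_hessian (\<lambda>k l. s * H k l) e (th p) i j) \<le> 0"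
    using local_max_signed_diff(2)[OF U \<psi> \<open>\<delta> > 0\<close> \<open>\<delta> \<le> tc p\<close> s max]
    by (intro Acoef_contraction_nonpos[OF \<open>\<tau> > 0\<close> \<open>\<sigma> \<ge> 0\<close>] frame_hessian_form_nonpos)
      (simp add: H_def)
  then have "s * (\<Sum>i\<in>{1,2,3}. \<Sum>j\<in>{1,2,3}. ?A i j * frame_hessian H e (th p) i j) \<le> 0"
    by (simp add: frame_hessian_def sum_distrib_left algebra_simps)
  moreover have "partial 3 \<psi> p = regularized_operator e \<tau> \<sigma> \<psi> p
      + (\<Sum>i\<in>{1,2,3}. \<Sum>j\<in>{1,2,3}. ?A i j * frame_hessian H e (th p) i j)"
    using grad[of 3] pde
    by (simp add: regularized_operator_def VFe_eq VFe_VFe_eq distrib_left sum.distrib)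
  ultimately show ?thesis
    by (simp add: distrib_left)
qed

section \<open>Quartic perturbation of test functions\<close>

lemma dist_pt: "dist (a1::real,a2::real,a3::real,a4::real) (b1,b2,b3,b4) =
   sqrt ((a1-b1)\<^sup>2 + (a2-b2)\<^sup>2 + (a3-b3)\<^sup>2 + (a4-b4)\<^sup>2)"
  by (simp add: dist_prod_def dist_real_def add.assoc)

definition coord :: "nat \<Rightarrow> pt \<Rightarrow> real" where
  "coord k q = (if k = 0 then fst q else if k = 1 then fst (snd q) else if k = 2 then fst (snd (snd q))
               else snd (snd (snd q)))"

definition sqdist :: "pt \<Rightarrow> pt \<Rightarrow> real" where
  "sqdist p0 q = (\<Sum>k\<in>{0,1,2,3}. (coord k q - coord k p0)\<^sup>2)"

text \<open>\<open>quartic p\<^sub>0 q = |q - p\<^sub>0|\<^sup>4\<close>; its partial derivatives \<open>quartic_d1\<close> and \<open>quartic_d2\<close> vanish at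
  \<open>p\<^sub>0\<close>, so adding a multiple of it to a test function keeps the derivatives up to order two
  at \<open>p\<^sub>0\<close> and makes a maximum at \<open>p\<^sub>0\<close> strict.\<close>

definition quartic :: "pt \<Rightarrow> pt \<Rightarrow> real" where
  "quartic p0 q = (sqdist p0 q)\<^sup>2"

definition quartic_d1 :: "pt \<Rightarrow> nat \<Rightarrow> pt \<Rightarrow> real" where
  "quartic_d1 p0 i q = 4 * sqdist p0 q * (coord i q - coord i p0)"

definition quartic_d2 :: "pt \<Rightarrow> nat \<Rightarrow> nat \<Rightarrow> pt \<Rightarrow> real" where
  "quartic_d2 p0 j i q =
     4 * (2 * (coord j q - coord j p0) * (coord i q - coord i p0) + (if i = j then sqdist p0 q else 0))"

lemma coord_add_unitv:
  "i < 4 \<Longrightarrow> k < 4 \<Longrightarrow> coord k (q + s *\<^sub>R unitv i) = coord k q + (if k = i then s else 0)"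
  by (cases q) (auto simp: coord_def unitv_def)

lemma sqdist_add_unitv: assumes "i < 4"
  shows "sqdist p0 (q + s *\<^sub>R unitv i) = sqdist p0 q + 2 * s * (coord i q - coord i p0) + s\<^sup>2"
proof -
  have "i = 0 \<or> i = 1 \<or> i = 2 \<or> i = 3" using assms by auto
  then show ?thesis
    by (elim disjE) (simp_all add: sqdist_def coord_add_unitv power2_eq_square algebra_simps)
qed

lemma sqdist_eq: "sqdist p q = (dist q p)\<^sup>2"
proof -
  obtain a b c d where q: "q = (a,b,c,d)" by (cases q)
  obtain a' b' c' d' where p: "p = (a',b',c',d')" by (cases p)
  have "0 \<le> (a - a')\<^sup>2 + (b - b')\<^sup>2 + (c - c')\<^sup>2 + (d - d')\<^sup>2" by simp
  then show ?thesis unfolding q p dist_pt by (simp add: sqdist_def coord_def)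
qed

lemma quartic_eq: "quartic p q = (dist q p) ^ 4"
  unfolding quartic_def sqdist_eq by simp

lemma continuous_on_coord: "continuous_on UNIV (coord k)"
proof -
  have "coord k = fst \<or> coord k = (\<lambda>q. fst (snd q)) \<or> coord k = (\<lambda>q. fst (snd (snd q)))
      \<or> coord k = (\<lambda>q. snd (snd (snd q)))"
    by (cases "k = 0"; cases "k = 1"; cases "k = 2") (auto simp: coord_def[abs_def])
  then show ?thesis by (elim disjE) (simp_all add: continuous_intros)
qed

lemma continuous_on_sqdist: "continuous_on UNIV (sqdist p0)"
  unfolding sqdist_def[abs_def] using continuous_on_coord by (intro continuous_intros) auto

lemma isCont_coord: "isCont (coord k) q"
  using continuous_on_coord continuous_on_eq_continuous_at open_UNIV by blast

lemma isCont_sqdist: "isCont (sqdist p0) q"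
  using continuous_on_sqdist continuous_on_eq_continuous_at open_UNIV by blast

lemma isCont_quartic_d1: "isCont (quartic_d1 p0 i) q"
  unfolding quartic_d1_def[abs_def] using isCont_coord isCont_sqdist by (intro continuous_intros)

lemma isCont_quartic_d2: "isCont (quartic_d2 p0 j i) q"
  unfolding quartic_d2_def[abs_def] using isCont_coord isCont_sqdist
  by (cases "i = j") (simp_all add: continuous_intros)

lemma quartic_has_derivative:
  assumes "i < 4"
  shows "((\<lambda>s. quartic p0 (q + s *\<^sub>R unitv i)) has_real_derivative quartic_d1 p0 i q) (at 0)"
proof -
  have e: "(\<lambda>s. quartic p0 (q + s *\<^sub>R unitv i))
      = (\<lambda>s. (sqdist p0 q + 2 * s * (coord i q - coord i p0) + s\<^sup>2)\<^sup>2)"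
    using sqdist_add_unitv[OF assms] by (simp add: quartic_def fun_eq_iff)
  show ?thesis unfolding e quartic_d1_def
    by (auto intro!: derivative_eq_intros simp: algebra_simps)
qed

lemma quartic_d1_has_derivative:
  assumes "i < 4" "j < 4"
  shows "((\<lambda>s. quartic_d1 p0 i (q + s *\<^sub>R unitv j)) has_real_derivative quartic_d2 p0 j i q) (at 0)"
proof -
  have e: "(\<lambda>s. quartic_d1 p0 i (q + s *\<^sub>R unitv j))
      = (\<lambda>s. 4 * (sqdist p0 q + 2 * s * (coord j q - coord j p0) + s\<^sup>2)
      * (coord i q - coord i p0 + (if i = j then s else 0)))"
  proof
    fix s
    show "quartic_d1 p0 i (q + s *\<^sub>R unitv j) = 4 * (sqdist p0 q + 2 * s * (coord j q - coord j p0) + s\<^sup>2)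
      * (coord i q - coord i p0 + (if i = j then s else 0))"
      unfolding quartic_d1_def sqdist_add_unitv[OF assms(2)] coord_add_unitv[OF assms(2) assms(1)] by simp
  qed
  show ?thesis unfolding e quartic_d2_def
    by (cases "i = j") (auto intro!: derivative_eq_intros simp: algebra_simps)
qed

lemma quartic_derivs_at_center: "sqdist p0 p0 = 0" "quartic_d1 p0 i p0 = 0" "quartic_d2 p0 j i p0 = 0"
  by (simp_all add: sqdist_def quartic_d1_def quartic_d2_def)

definition C2_fun :: "(pt \<Rightarrow> real) \<Rightarrow> bool" where
  "C2_fun phi \<longleftrightarrow> (\<forall>is. set is \<subseteq> {0,1,2,3} \<and> length is \<le> 2 \<longrightarrow> cont_partials UNIV phi is)"

lemma C2_if_smooth: "smooth_fun phi \<Longrightarrow> C2_fun phi"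
  unfolding smooth_fun_def C2_fun_def by blast

context
  fixes phi :: "pt \<Rightarrow> real"
  assumes pr: "C2_fun phi"
begin

lemma C2_single: "i < 4 \<Longrightarrow> cont_partials UNIV phi [i]"
proof -
  assume "i < 4"
  then have "set [i] \<subseteq> {0,1,2,3} \<and> length [i] \<le> 2" by auto
  then show ?thesis using pr unfolding C2_fun_def by blast
qed
lemma C2_pair: "i < 4 \<Longrightarrow> j < 4 \<Longrightarrow> cont_partials UNIV phi [j, i]"
proof -
  assume "i < 4" "j < 4"
  then have "set [j, i] \<subseteq> {0,1,2,3} \<and> length [j, i] \<le> 2" by auto
  then show ?thesis using pr unfolding C2_fun_def by blast
qed

lemma C2_slice: "i < 4 \<Longrightarrow> (\<lambda>s. phi (q + s *\<^sub>R unitv i)) differentiable (at 0)"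
  using cont_partials_single(3)[OF C2_single] by blast
lemma C2_slice2: "i < 4 \<Longrightarrow> j < 4 \<Longrightarrow> (\<lambda>s. partial i phi (q + s *\<^sub>R unitv j)) differentiable (at 0)"
  using cont_partials_pair(2)[OF C2_pair] by blast
lemma C2_isCont1: "i < 4 \<Longrightarrow> isCont (partial i phi) q"
  using cont_partials_single(1)[OF C2_single] continuous_on_eq_continuous_at[OF open_UNIV] by blast
lemma C2_isCont2: "i < 4 \<Longrightarrow> j < 4 \<Longrightarrow> isCont (partial j (partial i phi)) q"
  using cont_partials_pair(1)[OF C2_pair] continuous_on_eq_continuous_at[OF open_UNIV] by blast

end

definition perturbed :: "(pt \<Rightarrow> real) \<Rightarrow> real \<Rightarrow> pt \<Rightarrow> pt \<Rightarrow> real" where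
  "perturbed phi c p0 = (\<lambda>q. phi q + c * quartic p0 q)"

context
  fixes phi :: "pt \<Rightarrow> real" and c :: real and p0 :: pt
  assumes pr: "C2_fun phi"
begin

lemma partial_perturbed: "i < 4 \<Longrightarrow> partial i (perturbed phi c p0) q = partial i phi q + c * quartic_d1 p0 i q"
  unfolding perturbed_def by (rule partial_add_scaled(1)[OF C2_slice[OF pr] quartic_has_derivative])

lemma partial_perturbed_fun:
  "i < 4 \<Longrightarrow> partial i (perturbed phi c p0) = (\<lambda>q. partial i phi q + c * quartic_d1 p0 i q)"
  using partial_perturbed by blast

lemma perturbed_slice: "i < 4 \<Longrightarrow> (\<lambda>s. perturbed phi c p0 (q + s *\<^sub>R unitv i)) differentiable (at 0)"
  unfolding perturbed_def using partial_add_scaled(2)[OF C2_slice[OF pr] quartic_has_derivative] .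

lemma partial2_perturbed: "i < 4 \<Longrightarrow> j < 4 \<Longrightarrow>
   partial j (partial i (perturbed phi c p0)) q = partial j (partial i phi) q + c * quartic_d2 p0 j i q"
  unfolding partial_perturbed_fun by (rule partial_add_scaled(1)[OF C2_slice2[OF pr] quartic_d1_has_derivative])

lemma perturbed_slice2:
  "i < 4 \<Longrightarrow> j < 4 \<Longrightarrow> (\<lambda>s. partial i (perturbed phi c p0) (q + s *\<^sub>R unitv j)) differentiable (at 0)"
  unfolding partial_perturbed_fun
  using partial_add_scaled(2)[OF C2_slice2[OF pr] quartic_d1_has_derivative] by simp

lemma perturbed_isCont1: "i < 4 \<Longrightarrow> isCont (partial i (perturbed phi c p0)) q"
  unfolding partial_perturbed_fun using C2_isCont1[OF pr] isCont_quartic_d1 by (intro continuous_intros) auto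

lemma partial2_perturbed_fun: "i < 4 \<Longrightarrow> j < 4 \<Longrightarrow>
   partial j (partial i (perturbed phi c p0)) = (\<lambda>q. partial j (partial i phi) q + c * quartic_d2 p0 j i q)"
  using partial2_perturbed by blast

lemma perturbed_isCont2: "i < 4 \<Longrightarrow> j < 4 \<Longrightarrow> isCont (partial j (partial i (perturbed phi c p0))) q"
  unfolding partial2_perturbed_fun using C2_isCont2[OF pr] isCont_quartic_d2 by (intro continuous_intros) auto

lemma C21_pointwise_perturbed: "C21_pointwise (perturbed phi c p0)"
  unfolding C21_pointwise_def
  using perturbed_slice perturbed_slice2 perturbed_isCont1 perturbed_isCont2 by auto

lemma partials_differentiable_perturbed: "partials_differentiable_at (perturbed phi c p0) q"
  unfolding partials_differentiable_at_def using perturbed_slice2 by auto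

lemma perturbed_at_center: "i < 4 \<Longrightarrow> partial i (perturbed phi c p0) p0 = partial i phi p0"
  "i < 4 \<Longrightarrow> j < 4 \<Longrightarrow> partial j (partial i (perturbed phi c p0)) p0 = partial j (partial i phi) p0"
  by (simp_all add: partial_perturbed partial2_perturbed quartic_derivs_at_center)

end

context
  fixes phi :: "pt \<Rightarrow> real" and c :: real and p0 :: pt
  assumes pr: "C2_fun phi"
begin

lemma partials_differentiable_C2: "partials_differentiable_at phi q"
  unfolding partials_differentiable_at_def using C2_slice2[OF pr] by auto

lemma VF_perturbed:
  shows "isCont (VF m (perturbed phi c p0)) p0"
    and "VF m (perturbed phi c p0) p0 = VF m phi p0"
proof -
  show "isCont (VF m (perturbed phi c p0)) p0"
    unfolding VF_def using perturbed_isCont1[OF pr] isCont_th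
    by (cases "m = 1"; cases "m = 2") (auto intro!: continuous_intros)
  show "VF m (perturbed phi c p0) p0 = VF m phi p0"
    by (simp add: VF_def perturbed_at_center[OF pr])
qed

lemma VF_VF_perturbed:
  assumes ij: "i \<in> {1,2,3}" "j \<in> {1,2,3}"
  shows "isCont (VFe 1 i (VFe 1 j (perturbed phi c p0))) p0"
    and "VFe 1 i (VFe 1 j (perturbed phi c p0)) p0 = VFe 1 i (VFe 1 j phi) p0"
proof -
  let ?\<psi> = "perturbed phi c p0"
  have e: "VFe 1 i (VFe 1 j ?\<psi>) = (\<lambda>q. frame_hessian (\<lambda>k l. partial k (partial l ?\<psi>) q) 1 (th q) i j
     + frame_drift (partial 0 ?\<psi> q) (partial 1 ?\<psi> q) 1 (th q) i j)"
    using VFe_VFe_expand[OF partials_differentiable_perturbed[OF pr] ij] by blast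
  have H: "isCont (partial k (partial l (perturbed phi c p0))) p0" if "k < 3" "l < 3" for k l
    using perturbed_isCont2[OF pr] that by simp
  show "isCont (VFe 1 i (VFe 1 j (perturbed phi c p0))) p0"
    unfolding e
    by (rule isCont_frame_expansion[OF H _ _ ij]) (use perturbed_isCont1[OF pr] in auto)
  show "VFe 1 i (VFe 1 j (perturbed phi c p0)) p0 = VFe 1 i (VFe 1 j phi) p0"
    unfolding e VFe_VFe_expand[OF partials_differentiable_C2 ij]
    by (simp add: frame_hessian_def perturbed_at_center[OF pr])
qed

end

section \<open>Passing to the limit\<close>

lemma deg_op_eq_mc_op:
  assumes g: "grad0_sq phi p \<noteq> 0"
    and q1: "q 1 = VF 1 phi p / sqrt (grad0_sq phi p)" and q2: "q 2 = VF 2 phi p / sqrt (grad0_sq phi p)"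
  shows "deg_op q phi p = mc_op phi p"
proof -
  have gpos: "grad0_sq phi p > 0" using g unfolding grad0_sq_def
    by (smt (verit) sum_power2_eq_zero_iff zero_le_power2)
  have qq: "q i * q j = VF i phi p * VF j phi p / grad0_sq phi p" if "i \<in> {1,2}" "j \<in> {1,2}" for i j
  proof -
    have a: "q i = VF i phi p / sqrt (grad0_sq phi p)" using that q1 q2 by auto
    have b: "q j = VF j phi p / sqrt (grad0_sq phi p)" using that q1 q2 by auto
    have ss: "sqrt (grad0_sq phi p) * sqrt (grad0_sq phi p) = grad0_sq phi p" using gpos by simp
    have "VF i phi p / sqrt (grad0_sq phi p) * (VF j phi p / sqrt (grad0_sq phi p))
        = VF i phi p * VF j phi p / (sqrt (grad0_sq phi p) * sqrt (grad0_sq phi p))" by simp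
    then show ?thesis unfolding a b ss .
  qed
  show ?thesis unfolding deg_op_def mc_op_def
    by (intro sum.cong refl) (simp add: qq)
qed

lemma Acoef_mixed_term_tendsto_0:
  fixes eps tau sg Y :: "nat \<Rightarrow> real"
  assumes eps: "eps \<longlonglongrightarrow> 0" and sg: "sg \<longlonglongrightarrow> 0" and "\<And>k. tau k > 0" "\<And>k. sg k \<ge> 0"
    and Y: "Y \<longlonglongrightarrow> y" and ij: "i \<in> {1,2,3}" "j \<in> {1,2,3}" "i = 3 \<or> j = 3"
  shows "(\<lambda>k. Acoef (tau k) (sg k) (P k) i j * (eps_weight (eps k) i * eps_weight (eps k) j * Y k))
    \<longlonglongrightarrow> 0"
proof (rule Lim_null_comparison)
  have weight: "\<bar>eps_weight e i * eps_weight e j\<bar> \<le> \<bar>e\<bar> * (1 + \<bar>e\<bar>)" for e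
    using ij(3) by (auto simp: eps_weight_def abs_mult distrib_left)
  show "\<forall>\<^sub>F k in sequentially. norm (Acoef (tau k) (sg k) (P k) i j
      * (eps_weight (eps k) i * eps_weight (eps k) j * Y k))
    \<le> (2 + sg k) * (\<bar>eps k\<bar> * (1 + \<bar>eps k\<bar>) * \<bar>Y k\<bar>)"
  proof (rule always_eventually, rule allI)
    fix k
    have "\<bar>Acoef (tau k) (sg k) (P k) i j\<bar> \<le> 2 + sg k"
      using abs_Acoef_le[OF assms(3,4) ij(1,2)] .
    moreover have "\<bar>eps_weight (eps k) i * eps_weight (eps k) j * Y k\<bar>
        \<le> \<bar>eps k\<bar> * (1 + \<bar>eps k\<bar>) * \<bar>Y k\<bar>"
      unfolding abs_mult[of _ "Y k"] by (rule mult_right_mono[OF weight abs_ge_zero])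
    ultimately show "norm (Acoef (tau k) (sg k) (P k) i j
        * (eps_weight (eps k) i * eps_weight (eps k) j * Y k))
      \<le> (2 + sg k) * (\<bar>eps k\<bar> * (1 + \<bar>eps k\<bar>) * \<bar>Y k\<bar>)"
      unfolding real_norm_def abs_mult[of "Acoef _ _ _ _ _"]
      using \<open>sg k \<ge> 0\<close> by (intro mult_mono) auto
  qed
  have "(\<lambda>k. (2 + sg k) * (\<bar>eps k\<bar> * (1 + \<bar>eps k\<bar>) * \<bar>Y k\<bar>))
      \<longlonglongrightarrow> (2 + 0) * (\<bar>0\<bar> * (1 + \<bar>0\<bar>) * \<bar>y\<bar>)"
    by (intro tendsto_intros eps sg Y)
  then show "(\<lambda>k. (2 + sg k) * (\<bar>eps k\<bar> * (1 + \<bar>eps k\<bar>) * \<bar>Y k\<bar>)) \<longlonglongrightarrow> 0"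
    by simp
qed

lemma normalized_pair_convergent_subseq:
  fixes x y N :: "nat \<Rightarrow> real"
  assumes "\<And>k. (x k)\<^sup>2 + (y k)\<^sup>2 \<le> N k" and "\<And>k. N k > 0"
  obtains l r where "norm l \<le> 1" "strict_mono r"
    "((\<lambda>k. (x k / sqrt (N k), y k / sqrt (N k))) \<circ> r) \<longlonglongrightarrow> l"
proof -
  define z where "z k = (x k / sqrt (N k), y k / sqrt (N k))" for k
  have "z k \<in> cball 0 1" for k
  proof -
    have "(norm (z k))\<^sup>2 = ((x k)\<^sup>2 + (y k)\<^sup>2) / N k"
      using assms(2)[of k] by (simp add: z_def norm_Pair power_divide add_divide_distrib)
    also have "\<dots> \<le> 1"
      using assms[of k] by (simp add: divide_le_eq_1)
    finally show ?thesis
      using power2_le_imp_le[of "norm (z k)" 1] by simp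
  qed
  then obtain l r where "l \<in> cball 0 1" "strict_mono r" "(z \<circ> r) \<longlonglongrightarrow> l"
    using seq_compactE[OF compact_imp_seq_compact[OF compact_cball], of z] by metis
  with that[of l r] show thesis
    by (simp add: z_def[abs_def])
qed

lemma Acoef_weighted_sum_subseq_limit:
  fixes eps tau sg :: "nat \<Rightarrow> real" and V :: "nat \<Rightarrow> nat \<Rightarrow> real"
    and Y :: "nat \<Rightarrow> nat \<Rightarrow> nat \<Rightarrow> real"
  assumes eps: "eps \<longlonglongrightarrow> 0" and tau: "tau \<longlonglongrightarrow> 0" and sg: "sg \<longlonglongrightarrow> 0"
    and tau_pos: "\<And>k. tau k > 0" and sg_nonneg: "\<And>k. sg k \<ge> 0"
    and V: "\<And>m. V m \<longlonglongrightarrow> v m"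
    and Y: "\<And>i j. i \<in> {1,2,3} \<Longrightarrow> j \<in> {1,2,3} \<Longrightarrow> Y i j \<longlonglongrightarrow> Yp i j"
  defines "P k m \<equiv> eps_weight (eps k) m * V m k"
  shows "\<exists>q r. strict_mono r \<and> sqrt ((q 1)\<^sup>2 + (q 2)\<^sup>2) \<le> 1 \<and>
    ((v 1)\<^sup>2 + (v 2)\<^sup>2 \<noteq> 0 \<longrightarrow> (\<forall>m\<in>{1,2}. q m = v m / sqrt ((v 1)\<^sup>2 + (v 2)\<^sup>2))) \<and>
    (\<lambda>k. \<Sum>i\<in>{1,2,3}. \<Sum>j\<in>{1,2,3}. Acoef (tau (r k)) (sg (r k)) (P (r k)) i j
        * (eps_weight (eps (r k)) i * eps_weight (eps (r k)) j * Y i j (r k)))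
      \<longlonglongrightarrow> (\<Sum>i\<in>{1,2}. \<Sum>j\<in>{1,2}. (kdelta i j - q i * q j) * Yp i j)"
proof -
  have P: "P k 1 = V 1 k" "P k 2 = V 2 k" "P k 3 = eps k * V 3 k" for k
    by (simp_all add: P_def eps_weight_def)
  define N where "N k = (P k 1)\<^sup>2 + (P k 2)\<^sup>2 + (P k 3)\<^sup>2 + tau k" for k
  have N_pos: "N k > 0" for k
    using tau_pos[of k] unfolding N_def by (smt (verit) zero_le_power2)
  have "(P k 1)\<^sup>2 + (P k 2)\<^sup>2 \<le> N k" for k
    using tau_pos[of k] by (simp add: N_def)
  from normalized_pair_convergent_subseq[OF this N_pos]
  obtain l r where l: "norm l \<le> 1" and r: "strict_mono r"
    and lim: "((\<lambda>k. (P k 1 / sqrt (N k), P k 2 / sqrt (N k))) \<circ> r) \<longlonglongrightarrow> l" .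
  define q where "q i = (if i = 1 then fst l else snd l)" for i :: nat
  have q_lim: "(\<lambda>k. P (r k) m / sqrt (N (r k))) \<longlonglongrightarrow> q m" if "m \<in> {1,2}" for m
    using tendsto_fst[OF lim] tendsto_snd[OF lim] that by (auto simp: q_def o_def)
  have q_norm: "sqrt ((q 1)\<^sup>2 + (q 2)\<^sup>2) \<le> 1"
    using l by (cases l) (simp add: q_def norm_Pair)
  define T where "T i j k = Acoef (tau (r k)) (sg (r k)) (P (r k)) i j
    * (eps_weight (eps (r k)) i * eps_weight (eps (r k)) j * Y i j (r k))" for i j k
  have planar: "(\<lambda>k. T i j k) \<longlonglongrightarrow> (kdelta i j - q i * q j) * Yp i j" if "i \<in> {1,2}" "j \<in> {1,2}" for i j
  proof -
    have "(\<lambda>k. (kdelta i j * (1 + sg (r k)) - P (r k) i / sqrt (N (r k)) * (P (r k) j / sqrt (N (r k))))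
        * Y i j (r k)) \<longlonglongrightarrow> (kdelta i j * (1 + 0) - q i * q j) * Yp i j"
      using that LIMSEQ_subseq_LIMSEQ[OF sg r] LIMSEQ_subseq_LIMSEQ[OF Y r, of i j]
      by (intro tendsto_intros q_lim) (auto simp: o_def)
    moreover have "eps_weight e i = 1" "eps_weight e j = 1" for e
      using that by (auto simp: eps_weight_def)
    ultimately show ?thesis
      by (simp add: T_def Acoef_eq_normalized[OF tau_pos] N_def)
  qed
  have mixed: "(\<lambda>k. T i j k) \<longlonglongrightarrow> 0" if "i \<in> {1,2,3}" "j \<in> {1,2,3}" "i = 3 \<or> j = 3" for i j
    using LIMSEQ_subseq_LIMSEQ[OF Acoef_mixed_term_tendsto_0[OF eps sg tau_pos sg_nonneg Y[OF that(1,2)]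
      that, where P = P] r]
    by (simp add: T_def o_def)
  have "(\<lambda>k. T 1 1 k + T 1 2 k + T 2 1 k + T 2 2 k + (T 1 3 k + T 2 3 k + T 3 1 k + T 3 2 k + T 3 3 k))
      \<longlonglongrightarrow> (kdelta 1 1 - q 1 * q 1) * Yp 1 1 + (kdelta 1 2 - q 1 * q 2) * Yp 1 2
        + (kdelta 2 1 - q 2 * q 1) * Yp 2 1 + (kdelta 2 2 - q 2 * q 2) * Yp 2 2 + (0 + 0 + 0 + 0 + 0)"
    by (intro tendsto_add planar mixed) auto
  then have sum_lim: "(\<lambda>k. \<Sum>i\<in>{1,2,3}. \<Sum>j\<in>{1,2,3}. T i j k)
      \<longlonglongrightarrow> (\<Sum>i\<in>{1,2}. \<Sum>j\<in>{1,2}. (kdelta i j - q i * q j) * Yp i j)"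
    by (simp add: algebra_simps)
  have normalized: "q m = v m / sqrt ((v 1)\<^sup>2 + (v 2)\<^sup>2)" if "(v 1)\<^sup>2 + (v 2)\<^sup>2 \<noteq> 0" "m \<in> {1,2}" for m
  proof -
    have "N \<longlonglongrightarrow> (v 1)\<^sup>2 + (v 2)\<^sup>2 + (0 * v 3)\<^sup>2 + 0"
      unfolding N_def P by (intro tendsto_intros V eps tau)
    then have "(\<lambda>k. sqrt (N k)) \<longlonglongrightarrow> sqrt ((v 1)\<^sup>2 + (v 2)\<^sup>2)"
      by (intro tendsto_real_sqrt) simp
    then have "(\<lambda>k. V m k / sqrt (N k)) \<longlonglongrightarrow> v m / sqrt ((v 1)\<^sup>2 + (v 2)\<^sup>2)"
      using that(1) by (intro tendsto_divide V) simp_all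
    moreover have "P k m = V m k" for k
      using that(2) P by auto
    ultimately have "(\<lambda>k. P k m / sqrt (N k)) \<longlonglongrightarrow> v m / sqrt ((v 1)\<^sup>2 + (v 2)\<^sup>2)"
      by simp
    from LIMSEQ_subseq_LIMSEQ[OF this r] have "(\<lambda>k. P (r k) m / sqrt (N (r k)))
        \<longlonglongrightarrow> v m / sqrt ((v 1)\<^sup>2 + (v 2)\<^sup>2)"
      by (simp add: o_def)
    with q_lim[OF that(2)] show ?thesis
      using LIMSEQ_unique by blast
  qed
  show ?thesis
    using r q_norm normalized sum_lim unfolding T_def by blast
qed

lemma deg_op_eq_VFe_sum:
  "deg_op q f p = (\<Sum>i\<in>{1,2}. \<Sum>j\<in>{1,2}. (kdelta i j - q i * q j) * VFe 1 i (VFe 1 j f) p)"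
  unfolding deg_op_def by (intro sum.cong refl) (auto simp: VFe_def)

lemma limit_of_touching_inequalities:
  fixes phi :: "pt \<Rightarrow> real" and pk :: "nat \<Rightarrow> pt" and eps tau sg :: "nat \<Rightarrow> real"
  assumes phi: "C2_fun phi" and s: "s = 1 \<or> s = -1" and pk: "pk \<longlonglongrightarrow> p0"
    and eps: "eps \<longlonglongrightarrow> 0" and tau: "tau \<longlonglongrightarrow> 0" and sg: "sg \<longlonglongrightarrow> 0"
    and tau_pos: "\<And>k. tau k > 0" and sg_nonneg: "\<And>k. sg k \<ge> 0"
    and ineq: "\<forall>\<^sub>F k in sequentially. s * partial 3 (perturbed phi c p0) (pk k)
      \<le> s * regularized_operator (eps k) (tau k) (sg k) (perturbed phi c p0) (pk k)"
  shows "\<exists>q. sqrt ((q 1)\<^sup>2 + (q 2)\<^sup>2) \<le> 1 \<and> s * partial 3 phi p0 \<le> s * deg_op q phi p0 \<and>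
    (grad0_sq phi p0 \<noteq> 0 \<longrightarrow> deg_op q phi p0 = mc_op phi p0)"
proof -
  define \<psi> where "\<psi> = perturbed phi c p0"
  define V where "V m k = VF m \<psi> (pk k)" for m k
  define Y where "Y i j k = VFe 1 i (VFe 1 j \<psi>) (pk k)" for i j k
  have V: "V m \<longlonglongrightarrow> VF m phi p0" for m
    using isCont_tendsto_compose[OF VF_perturbed(1)[OF phi] pk] VF_perturbed(2)[OF phi]
    by (simp add: V_def[abs_def] \<psi>_def)
  have Y: "Y i j \<longlonglongrightarrow> VFe 1 i (VFe 1 j phi) p0" if "i \<in> {1,2,3}" "j \<in> {1,2,3}" for i j
    using isCont_tendsto_compose[OF VF_VF_perturbed(1)[OF phi that] pk] VF_VF_perturbed(2)[OF phi that]
    by (simp add: Y_def[abs_def] \<psi>_def)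
  obtain q r where r: "strict_mono r" and q_norm: "sqrt ((q 1)\<^sup>2 + (q 2)\<^sup>2) \<le> 1"
    and q_dir: "(VF 1 phi p0)\<^sup>2 + (VF 2 phi p0)\<^sup>2 \<noteq> 0 \<longrightarrow>
      (\<forall>m\<in>{1,2}. q m = VF m phi p0 / sqrt ((VF 1 phi p0)\<^sup>2 + (VF 2 phi p0)\<^sup>2))"
    and rhs_lim: "(\<lambda>k. \<Sum>i\<in>{1,2,3}. \<Sum>j\<in>{1,2,3}.
        Acoef (tau (r k)) (sg (r k)) (\<lambda>m. eps_weight (eps (r k)) m * V m (r k)) i j
        * (eps_weight (eps (r k)) i * eps_weight (eps (r k)) j * Y i j (r k)))
      \<longlonglongrightarrow> (\<Sum>i\<in>{1,2}. \<Sum>j\<in>{1,2}. (kdelta i j - q i * q j) * VFe 1 i (VFe 1 j phi) p0)"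
    using Acoef_weighted_sum_subseq_limit[where V = V and v = "\<lambda>m. VF m phi p0" and Y = Y
        and Yp = "\<lambda>i j. VFe 1 i (VFe 1 j phi) p0", OF eps tau sg tau_pos sg_nonneg V Y]
    by blast
  from rhs_lim have rhs_lim': "(\<lambda>k. s * regularized_operator (eps (r k)) (tau (r k)) (sg (r k)) \<psi> (pk (r k)))
      \<longlonglongrightarrow> s * deg_op q phi p0"
    unfolding regularized_operator_eps_weight[OF partials_differentiable_perturbed[OF phi]] \<psi>_def V_def Y_def
      deg_op_eq_VFe_sum by (intro tendsto_mult_left) simp
  have "isCont (partial 3 \<psi>) p0" "partial 3 \<psi> p0 = partial 3 phi p0"
    using perturbed_isCont1[OF phi] perturbed_at_center(1)[OF phi] by (simp_all add: \<psi>_def)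
  then have "(\<lambda>k. partial 3 \<psi> (pk k)) \<longlonglongrightarrow> partial 3 phi p0"
    using isCont_tendsto_compose[OF _ pk] by metis
  from LIMSEQ_subseq_LIMSEQ[OF this r]
  have lhs_lim: "(\<lambda>k. s * partial 3 \<psi> (pk (r k))) \<longlonglongrightarrow> s * partial 3 phi p0"
    by (intro tendsto_mult_left) (simp add: o_def)
  have "\<forall>\<^sub>F k in sequentially. s * partial 3 \<psi> (pk (r k))
      \<le> s * regularized_operator (eps (r k)) (tau (r k)) (sg (r k)) \<psi> (pk (r k))"
    unfolding \<psi>_def by (rule eventually_subseq[OF r ineq])
  then have "s * partial 3 phi p0 \<le> s * deg_op q phi p0"
    by (rule tendsto_le[OF trivial_limit_sequentially rhs_lim' lhs_lim])
  moreover have "deg_op q phi p0 = mc_op phi p0" if "grad0_sq phi p0 \<noteq> 0"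
    using q_dir that by (intro deg_op_eq_mc_op) (auto simp: grad0_sq_def)
  ultimately show ?thesis
    using q_norm by blast
qed

lemma reg_solutionD:
  assumes "reg_solution eps tau sg u0 U"
  shows "continuous_on {p. tc p \<ge> 0} U" "C21_on {p. tc p > 0} U" "U (x, y, z, 0) = u0 (x, y, z)"
    and "tc p > 0 \<Longrightarrow> partial 3 U p = regularized_operator eps tau sg U p"
  using assms unfolding reg_solution_def regularized_operator_def by blast+

lemma penalized_maximizers:
  fixes F :: "nat \<Rightarrow> 'a :: metric_space \<Rightarrow> real"
  assumes "compact K" "p \<in> K" and cont: "\<And>k. continuous_on K (F k)"
    and lim: "uniform_limit K F f sequentially"
    and max: "\<And>q. q \<in> K \<Longrightarrow> f q \<le> f p"
  obtains pk where "\<And>k. pk k \<in> K"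
    and "\<And>k q. q \<in> K \<Longrightarrow> F k q - dist q p ^ 4 \<le> F k (pk k) - dist (pk k) p ^ 4"
    and "pk \<longlonglongrightarrow> p"
proof -
  have "continuous_on K (\<lambda>q. F k q - dist q p ^ 4)" for k
    using cont by (intro continuous_intros)
  then have "\<exists>x\<in>K. \<forall>q\<in>K. F k q - dist q p ^ 4 \<le> F k x - dist x p ^ 4" for k
    using continuous_attains_sup[OF \<open>compact K\<close>] \<open>p \<in> K\<close> by blast
  then obtain pk where pk: "\<And>k. pk k \<in> K"
    and pk_max: "\<And>k q. q \<in> K \<Longrightarrow> F k q - dist q p ^ 4 \<le> F k (pk k) - dist (pk k) p ^ 4"
    by metis
  have "pk \<longlonglongrightarrow> p"
  proof (rule tendstoI)
    fix \<epsilon> :: real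
    assume "\<epsilon> > 0"
    then have "\<forall>\<^sub>F k in sequentially. \<forall>x\<in>K. dist (F k x) (f x) < \<epsilon> ^ 4 / 2"
      using uniform_limitD[OF lim, of "\<epsilon> ^ 4 / 2"] by simp
    then show "\<forall>\<^sub>F k in sequentially. dist (pk k) p < \<epsilon>"
    proof eventually_elim
      case (elim k)
      have "dist (pk k) p ^ 4 \<le> F k (pk k) - F k p"
        using pk_max[OF \<open>p \<in> K\<close>, of k] by simp
      also have "\<dots> < (f (pk k) + \<epsilon> ^ 4 / 2) - (f p - \<epsilon> ^ 4 / 2)"
        using elim pk[of k] \<open>p \<in> K\<close> unfolding dist_real_def by (smt (verit, best))
      also have "\<dots> \<le> \<epsilon> ^ 4"
        using max[OF pk[of k]] by simp
      finally show "dist (pk k) p < \<epsilon>"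
        using power_less_imp_less_base[of "dist (pk k) p" 4 \<epsilon>] \<open>\<epsilon> > 0\<close> by simp
    qed
  qed
  with pk pk_max show thesis
    by (rule that)
qed

lemma regularized_touching_at_penalized_max:
  assumes U: "reg_solution eps tau sg u0 U" and "tau > 0" "sg > 0"
    and s: "s = 1 \<or> s = -1" and phi: "C2_fun phi" and "\<delta> > 0" "\<delta> \<le> tc q0"
    and max: "\<And>q. dist q q0 < \<delta> \<Longrightarrow>
      s * (U q - phi q) - dist q p ^ 4 \<le> s * (U q0 - phi q0) - dist q0 p ^ 4"
  shows "s * partial 3 (perturbed phi s p) q0 \<le> s * regularized_operator eps tau sg (perturbed phi s p) q0"
proof (rule regularized_touching[OF \<open>tau > 0\<close> _ \<open>\<delta> > 0\<close> \<open>\<delta> \<le> tc q0\<close> s])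
  show "s * (U q - perturbed phi s p q) \<le> s * (U q0 - perturbed phi s p q0)" if "dist q q0 < \<delta>" for q
    using max[OF that] s by (auto simp: perturbed_def quartic_eq algebra_simps)
  have "tc q0 > 0"
    using \<open>\<delta> > 0\<close> \<open>\<delta> \<le> tc q0\<close> by linarith
  then show "partial 3 U q0 = regularized_operator eps tau sg U q0"
    by (rule reg_solutionD(4)[OF U])
qed (use \<open>sg > 0\<close> C21_pointwise_if_C21_on[OF reg_solutionD(2)[OF U]] C21_pointwise_perturbed[OF phi] in auto)

lemma vanishing_viscosity_penalized_maximizers:
  fixes U :: "nat \<Rightarrow> pt \<Rightarrow> real" and u phi :: "pt \<Rightarrow> real"
  assumes U: "\<forall>k. reg_solution (eps k) (tau k) (sg k) u0 (U k)"
    and lim: "\<forall>K. compact K \<and> K \<subseteq> {p. tc p \<ge> 0} \<longrightarrow> uniform_limit K U u sequentially"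
    and phi: "C2_fun phi" and "tc p > 0" "r > 0"
    and touch: "\<forall>q. dist q p < r \<and> tc q > 0 \<longrightarrow> s * (u q - phi q) \<le> s * (u p - phi p)"
  obtains \<rho> pk where "\<rho> > 0" "2 * \<rho> \<le> tc p" "pk \<longlonglongrightarrow> p"
    and "\<And>k q. dist q p \<le> \<rho> \<Longrightarrow>
      s * (U k q - phi q) - dist q p ^ 4 \<le> s * (U k (pk k) - phi (pk k)) - dist (pk k) p ^ 4"
proof -
  define \<rho> where "\<rho> = min r (tc p) / 2"
  have \<rho>: "\<rho> > 0" "\<rho> < r" "2 * \<rho> \<le> tc p"
    using \<open>r > 0\<close> \<open>tc p > 0\<close> by (auto simp: \<rho>_def)
  define K where "K = cball p \<rho>"
  have K: "compact K" "p \<in> K" "\<And>q. q \<in> K \<Longrightarrow> dist q p < r"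
    using \<rho> by (auto simp: K_def dist_commute)
  have K_tc: "tc q \<ge> \<rho>" if "q \<in> K" for q
    using that abs_tc_diff_le_dist[of q p] \<rho> by (simp add: K_def dist_commute)
  then have "K \<subseteq> {q. tc q \<ge> 0}"
    using \<rho>(1) by force
  have "continuous_on K (U k)" for k
    using reg_solutionD(1)[of "eps k" "tau k" "sg k" u0 "U k"] U \<open>K \<subseteq> {q. tc q \<ge> 0}\<close>
    by (blast intro: continuous_on_subset)
  moreover have "continuous_on K phi"
    using continuous_on_subset[OF cont_partials_single(2)[OF C2_single[OF phi, of 0]]] by simp
  ultimately have cont: "continuous_on K (\<lambda>q. s * (U k q - phi q))" for k
    by (intro continuous_intros)
  have ulim: "uniform_limit K (\<lambda>k q. s * (U k q - phi q)) (\<lambda>q. s * (u q - phi q)) sequentially"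
    using lim \<open>K \<subseteq> {q. tc q \<ge> 0}\<close> K(1) by (intro uniform_limit_intros) simp
  have max: "s * (u q - phi q) \<le> s * (u p - phi p)" if "q \<in> K" for q
  proof -
    have "tc q > 0"
      using K_tc[OF that] \<rho>(1) by linarith
    with touch K(3)[OF that] show ?thesis
      by blast
  qed
  obtain pk where "\<And>k. pk k \<in> K" and pk_max: "\<And>k q. q \<in> K \<Longrightarrow>
      s * (U k q - phi q) - dist q p ^ 4 \<le> s * (U k (pk k) - phi (pk k)) - dist (pk k) p ^ 4"
    and "pk \<longlonglongrightarrow> p"
    using penalized_maximizers[OF K(1,2) cont ulim max] by blast
  show thesis
  proof (rule that[OF \<rho>(1,3) \<open>pk \<longlonglongrightarrow> p\<close>])
    show "s * (U k q - phi q) - dist q p ^ 4 \<le> s * (U k (pk k) - phi (pk k)) - dist (pk k) p ^ 4"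
      if "dist q p \<le> \<rho>" for k q
      using that by (intro pk_max) (simp add: K_def dist_commute)
  qed
qed

lemma vanishing_viscosity_test_inequality:
  fixes eps tau sg :: "nat \<Rightarrow> real" and U :: "nat \<Rightarrow> pt \<Rightarrow> real" and u phi :: "pt \<Rightarrow> real"
  assumes pos: "\<forall>k. eps k > 0 \<and> tau k > 0 \<and> sg k > 0"
    and eps: "eps \<longlonglongrightarrow> 0" and tau: "tau \<longlonglongrightarrow> 0" and sg: "sg \<longlonglongrightarrow> 0"
    and U: "\<forall>k. reg_solution (eps k) (tau k) (sg k) u0 (U k)"
    and lim: "\<forall>K. compact K \<and> K \<subseteq> {p. tc p \<ge> 0} \<longrightarrow> uniform_limit K U u sequentially"
    and s: "s = 1 \<or> s = -1" and "tc p > 0" and phi: "smooth_fun phi" and "r > 0"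
    and touch: "\<forall>q. dist q p < r \<and> tc q > 0 \<longrightarrow> s * (u q - phi q) \<le> s * (u p - phi p)"
  shows "\<exists>q. sqrt ((q 1)\<^sup>2 + (q 2)\<^sup>2) \<le> 1 \<and> s * partial 3 phi p \<le> s * deg_op q phi p \<and>
    (grad0_sq phi p \<noteq> 0 \<longrightarrow> deg_op q phi p = mc_op phi p)"
proof -
  have phi': "C2_fun phi"
    using C2_if_smooth[OF phi] .
  obtain \<rho> pk where \<rho>: "\<rho> > 0" "2 * \<rho> \<le> tc p" and "pk \<longlonglongrightarrow> p"
    and pk_max: "\<And>k q. dist q p \<le> \<rho> \<Longrightarrow>
      s * (U k q - phi q) - dist q p ^ 4 \<le> s * (U k (pk k) - phi (pk k)) - dist (pk k) p ^ 4"
    using vanishing_viscosity_penalized_maximizers[OF U lim phi' \<open>tc p > 0\<close> \<open>r > 0\<close> touch]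
    by blast
  have "\<forall>\<^sub>F k in sequentially. dist (pk k) p < \<rho> / 2"
    using tendstoD[OF \<open>pk \<longlonglongrightarrow> p\<close>, of "\<rho> / 2"] \<rho>(1) by simp
  then have "\<forall>\<^sub>F k in sequentially. s * partial 3 (perturbed phi s p) (pk k)
      \<le> s * regularized_operator (eps k) (tau k) (sg k) (perturbed phi s p) (pk k)"
  proof eventually_elim
    case (elim k)
    show ?case
    proof (rule regularized_touching_at_penalized_max[OF _ _ _ s phi'])
      show "\<rho> / 2 \<le> tc (pk k)"
        using abs_tc_diff_le_dist[of "pk k" p] elim \<rho>(2) by linarith
      show "s * (U k q - phi q) - dist q p ^ 4 \<le> s * (U k (pk k) - phi (pk k)) - dist (pk k) p ^ 4"
        if "dist q (pk k) < \<rho> / 2" for q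
        using that elim dist_triangle[of q p "pk k"] by (intro pk_max) simp
    qed (use U pos \<rho>(1) in auto)
  qed
  with pos show ?thesis
    by (intro limit_of_touching_inequalities[OF phi' s \<open>pk \<longlonglongrightarrow> p\<close> eps tau sg]) (auto simp: less_imp_le)
qed

lemma viscosity_solutionI:
  assumes cont: "continuous_on {p. tc p \<ge> 0} u"
    and test: "\<And>s p phi r. s = 1 \<or> s = -1 \<Longrightarrow> tc p > 0 \<Longrightarrow> smooth_fun phi \<Longrightarrow> r > 0 \<Longrightarrow>
      \<forall>q. dist q p < r \<and> tc q > 0 \<longrightarrow> s * (u q - phi q) \<le> s * (u p - phi p) \<Longrightarrow>
      \<exists>q. sqrt ((q 1)\<^sup>2 + (q 2)\<^sup>2) \<le> 1 \<and> s * partial 3 phi p \<le> s * deg_op q phi p \<and>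
        (grad0_sq phi p \<noteq> 0 \<longrightarrow> deg_op q phi p = mc_op phi p)"
  shows "viscosity_solution u"
proof -
  have "viscosity_subsolution u"
    unfolding viscosity_subsolution_def
  proof (rule conjI[OF cont], intro allI impI)
    fix p phi
    assume "0 < tc p \<and> smooth_fun phi \<and> (\<exists>r>0. \<forall>q. dist q p < r \<and> 0 < tc q \<longrightarrow> u q - phi q \<le> u p - phi p)"
    then obtain r where "tc p > 0" "smooth_fun phi" "r > 0"
      and r: "\<forall>q. dist q p < r \<and> tc q > 0 \<longrightarrow> u q - phi q \<le> u p - phi p"
      by blast
    then have "\<exists>q. sqrt ((q 1)\<^sup>2 + (q 2)\<^sup>2) \<le> 1 \<and> 1 * partial 3 phi p \<le> 1 * deg_op q phi p \<and>
        (grad0_sq phi p \<noteq> 0 \<longrightarrow> deg_op q phi p = mc_op phi p)"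
      by (intro test[where r = r]) simp_all
    then show "(grad0_sq phi p \<noteq> 0 \<longrightarrow> partial 3 phi p \<le> mc_op phi p) \<and>
      (grad0_sq phi p = 0 \<longrightarrow> (\<exists>q. sqrt ((q 1)\<^sup>2 + (q 2)\<^sup>2) \<le> 1 \<and> partial 3 phi p \<le> deg_op q phi p))"
      by auto
  qed
  moreover have "viscosity_supersolution u"
    unfolding viscosity_supersolution_def
  proof (rule conjI[OF cont], intro allI impI)
    fix p phi
    assume "0 < tc p \<and> smooth_fun phi \<and> (\<exists>r>0. \<forall>q. dist q p < r \<and> 0 < tc q \<longrightarrow> u p - phi p \<le> u q - phi q)"
    then obtain r where "tc p > 0" "smooth_fun phi" "r > 0"
      and r: "\<forall>q. dist q p < r \<and> tc q > 0 \<longrightarrow> u p - phi p \<le> u q - phi q"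
      by blast
    then have "\<exists>q. sqrt ((q 1)\<^sup>2 + (q 2)\<^sup>2) \<le> 1 \<and> -1 * partial 3 phi p \<le> -1 * deg_op q phi p \<and>
        (grad0_sq phi p \<noteq> 0 \<longrightarrow> deg_op q phi p = mc_op phi p)"
      by (intro test[where r = r]) fastforce+
    then show "(grad0_sq phi p \<noteq> 0 \<longrightarrow> partial 3 phi p \<ge> mc_op phi p) \<and>
      (grad0_sq phi p = 0 \<longrightarrow> (\<exists>q. sqrt ((q 1)\<^sup>2 + (q 2)\<^sup>2) \<le> 1 \<and> partial 3 phi p \<ge> deg_op q phi p))"
      by auto
  qed
  ultimately show ?thesis
    by (simp add: viscosity_solution_def)
qed

lemma vanishing_viscosity_initial_datum:
  assumes U: "\<forall>k. reg_solution (eps k) (tau k) (sg k) u0 (U k)"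
    and lim: "\<forall>K. compact K \<and> K \<subseteq> {p. tc p \<ge> 0} \<longrightarrow> uniform_limit K U u sequentially"
  shows "u (x, y, z, 0) = u0 (x, y, z)"
proof -
  have "(\<lambda>k. U k (x, y, z, 0)) \<longlonglongrightarrow> u (x, y, z, 0)"
    using tendsto_uniform_limitI[OF lim[rule_format, of "{(x, y, z, 0)}"]] by simp
  moreover have "U k (x, y, z, 0) = u0 (x, y, z)" for k
    using U reg_solutionD(3) by blast
  ultimately have "(\<lambda>k. u0 (x, y, z)) \<longlonglongrightarrow> u (x, y, z, 0)"
    by simp
  from LIMSEQ_unique[OF tendsto_const this] show ?thesis
    by simp
qed

text \<open>The Lipschitz bound is used only through continuity, and the hypotheses on \<open>u0\<close> only
  matter for the existence of \<open>u\<close>.\<close>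

theorem mainTheorem4:
  fixes u0 :: "real \<times> real \<times> real \<Rightarrow> real" and u :: "pt \<Rightarrow> real"
  assumes u0_cont: "continuous_on UNIV u0"
    and u0_per: "\<forall>x y z. u0 (x, y, z + 2 * pi) = u0 (x, y, z)"
    and u0_const: "\<exists>S>0. \<exists>c. \<forall>x y z. x\<^sup>2 + y\<^sup>2 \<ge> S \<longrightarrow> u0 (x, y, z) = c"
    and u_lip: "\<exists>L. L-lipschitz_on {p. tc p \<ge> 0} u"
    and u_vv: "vanishing_viscosity_solution u0 u"
  shows "viscosity_solution u \<and> (\<forall>x y z. u (x, y, z, 0) = u0 (x, y, z))"
proof -
  obtain eps tau sg :: "nat \<Rightarrow> real" and U :: "nat \<Rightarrow> pt \<Rightarrow> real" where
    pos: "\<forall>k. eps k > 0 \<and> tau k > 0 \<and> sg k > 0"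
    and eps: "eps \<longlonglongrightarrow> 0" and tau: "tau \<longlonglongrightarrow> 0" and sg: "sg \<longlonglongrightarrow> 0"
    and U: "\<forall>k. reg_solution (eps k) (tau k) (sg k) u0 (U k)"
    and lim: "\<forall>K. compact K \<and> K \<subseteq> {p. tc p \<ge> 0} \<longrightarrow> uniform_limit K U u sequentially"
    using u_vv unfolding vanishing_viscosity_solution_def by blast
  have "continuous_on {p. tc p \<ge> 0} u"
    using u_lip lipschitz_on_continuous_on by blast
  then have "viscosity_solution u"
    by (rule viscosity_solutionI) (rule vanishing_viscosity_test_inequality[OF pos eps tau sg U lim])
  with vanishing_viscosity_initial_datum[OF U lim] show ?thesis
    by blast
qed

end
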